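(* Let $\mathcal Z$ be a data space with distribution $\xi$, $\mathcal W$ a parameter space, $\ell:\mathcal W\times\mathcal Z\to\mathbb R$ a loss function, and $P_{W|Z_{[n]}}$ a learning algorithm (Markov kernel from $\mathcal Z^n$ to $\mathcal W$). In the supersample construction described in the context, for each $i=1,\dots,n$ let $(\tilde W_i,\tilde R_i)$ be a decoupled pair of $(W,R_i)$ conditioned on $Z_i^\pm$, and set $\tilde G_i=\tilde R_i\big(\ell(\tilde W_i,Z_i^-)-\ell(\tilde W_i,Z_i^+)\big)$. Then $$\mathrm{gen}(\xi,P_{W|Z_{[n]}})\le \frac1n\sum_{i=1}^n \mathbb E\Big[\Psi^{*-1}_{\tilde G_i|Z_i^\pm}\big(I_{Z_i^\pm}(W;R_i)\big)\Big]\le \frac1n\sum_{i=1}^n \bar\psi^{*-1}_{\tilde G_i|Z_i^\pm}\big(I(W;R_i\mid Z_i^\pm)\big).$$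
   Context: Population loss $L_\xi(w)=\int_{\mathcal Z}\ell(w,z)\,\xi(dz)$; empirical loss $L_{Z_{[n]}}(w)=\frac1n\sum_{i=1}^n\ell(w,Z_i)$; the generalization error is $\mathrm{gen}(\xi,P_{W|Z_{[n]}})=\mathbb E[L_\xi(W)-L_{Z_{[n]}}(W)]$, where $Z_1,\dots,Z_n$ are i.i.d. $\xi$ and $W\sim P_{W|Z_{[n]}}$ given $Z_{[n]}=(Z_1,\dots,Z_n)$. Supersample construction: $Z_i^{s}$, $s\in\{-1,+1\}$, $i=1,\dots,n$, are $2n$ i.i.d. samples from $\xi$; write $Z_i^-=Z_i^{-1}$, $Z_i^+=Z_i^{+1}$, $Z_i^\pm=(Z_i^-,Z_i^+)$, $Z^\pm_{[n]}=(Z_1^\pm,\dots,Z_n^\pm)$; $R_1,\dots,R_n$ are i.i.d. uniform on $\{-1,1\}$ (Rademacher), independent of the supersample; $W$ is the output of $P_{W|Z_{[n]}}$ on the training vector $(Z_1^{R_1},\dots,Z_n^{R_n})$. A decoupled pair of $(X,Y)$ conditioned on $U$ is a pair $(\tilde X,\tilde Y)$ (jointly defined with $U$) with $(\tilde X,U)\overset{D}{=}(X,U)$, $(\tilde Y,U)\overset{D}{=}(Y,U)$ and $\tilde X - U - \tilde Y$ a Markov chain. Sample-conditioned mutual information: $I_u(X;Y)=I(X;Y\mid U=u)$, and $I_U(X;Y)$ is this function evaluated at the random $U$ (so $\mathbb E[I_U(X;Y)]=I(X;Y|U)$); mutual information is in nats. For random variables $F,U$: $\psi_{F|U}(\lambda,u)=\ln\mathbb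 E[e^{\lambda(F-\mathbb E[F|U=u])}\mid U=u]$, $\psi^{*-1}_{F|U}(\eta,u)=\inf_{\lambda>0}\frac{\eta+\psi_{F|U}(\lambda,u)}{\lambda}$ for $\eta\ge0$; $\Psi_{F|U}(\lambda)=\psi_{F|U}(\lambda,U)$, $\Psi^{*-1}_{F|U}(\eta)=\psi^{*-1}_{F|U}(\eta,U)$ (random); $\bar\psi_{F|U}(\lambda)=\mathbb E[\Psi_{F|U}(\lambda)]$ and $\bar\psi^{*-1}_{F|U}(\eta)=\inf_{\lambda>0}\frac{\eta+\bar\psi_{F|U}(\lambda)}{\lambda}$. *)

theory Defs
  imports "HOL-Probability.Probability"
begin

definition eln :: "ennreal \<Rightarrow> ereal" where
  "eln x = (if x = \<infinity> then \<infinity> else if x = 0 then -\<infinity> else ereal (ln (enn2real x)))"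

definition eexp :: "'a measure \<Rightarrow> ('a \<Rightarrow> ereal) \<Rightarrow> ereal" where
  "eexp M f = enn2ereal (\<integral>\<^sup>+ x. e2ennreal (f x) \<partial>M) - enn2ereal (\<integral>\<^sup>+ x. e2ennreal (- f x) \<partial>M)"

definition kl_div :: "'a measure \<Rightarrow> 'a measure \<Rightarrow> ereal" where
  "kl_div P Q =
     (if absolutely_continuous Q P
      then eexp Q (\<lambda>x. let f = enn2real (RN_deriv Q P x) in ereal (f * ln f))
      else \<infinity>)"

definition mutual_info :: "'a measure \<Rightarrow> 'b measure \<Rightarrow> ('a \<times> 'b) measure \<Rightarrow> ereal" where
  "mutual_info M N P = kl_div P (distr P M fst \<Otimes>\<^sub>M distr P N snd)"

text \<open>Conditional CGF \<psi>_{F|U}(\<lambda>,u), given the conditional law LF of F given U = u.\<close>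
definition cgf :: "real measure \<Rightarrow> real \<Rightarrow> ereal" where
  "cgf LF t = (let m = (\<integral>x. x \<partial>LF) in eln (\<integral>\<^sup>+ x. ennreal (exp (t * (x - m))) \<partial>LF))"

text \<open>Generalised inverse of the convex conjugate: inf over \<lambda> > 0 of (\<eta> + \<psi>(\<lambda>)) / \<lambda>.\<close>
definition inv_conj :: "(real \<Rightarrow> ereal) \<Rightarrow> ereal \<Rightarrow> ereal" where
  "inv_conj \<psi> \<eta> = (INF t\<in>{0<..}. (\<eta> + \<psi> t) / ereal t)"

definition rad :: "int measure" where
  "rad = measure_pmf (pmf_of_set {-1, 1})"

text \<open>Training vector (Z_1^{R_1},...,Z_n^{R_n}); indices are 0,...,n-1;
  Z_i^- = fst, Z_i^+ = snd.\<close>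
definition train :: "nat \<Rightarrow> (nat \<Rightarrow> 'z \<times> 'z) \<Rightarrow> (nat \<Rightarrow> int) \<Rightarrow> nat \<Rightarrow> 'z" where
  "train n zs rs = (\<lambda>i. if i < n then (if rs i = 1 then snd (zs i) else fst (zs i)) else undefined)"

definition joint_ZW :: "'z measure \<Rightarrow> 'w measure \<Rightarrow> ((nat \<Rightarrow> 'z) \<Rightarrow> 'w measure) \<Rightarrow> nat
    \<Rightarrow> ((nat \<Rightarrow> 'z) \<times> 'w) measure" where
  "joint_ZW \<xi> MW K n =
     PiM {..<n} (\<lambda>_. \<xi>) \<bind> (\<lambda>zs. K zs \<bind> (\<lambda>w. return (PiM {..<n} (\<lambda>_. \<xi>) \<Otimes>\<^sub>M MW) (zs, w)))"

definition pop_loss :: "'z measure \<Rightarrow> ('w \<Rightarrow> 'z \<Rightarrow> real) \<Rightarrow> 'w \<Rightarrow> real" where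
  "pop_loss \<xi> loss w = (\<integral>z. loss w z \<partial>\<xi>)"

definition emp_loss :: "nat \<Rightarrow> ('w \<Rightarrow> 'z \<Rightarrow> real) \<Rightarrow> (nat \<Rightarrow> 'z) \<Rightarrow> 'w \<Rightarrow> real" where
  "emp_loss n loss zs w = (\<Sum>i<n. loss w (zs i)) / real n"

definition gen :: "'z measure \<Rightarrow> 'w measure \<Rightarrow> ((nat \<Rightarrow> 'z) \<Rightarrow> 'w measure) \<Rightarrow> nat
    \<Rightarrow> ('w \<Rightarrow> 'z \<Rightarrow> real) \<Rightarrow> real" where
  "gen \<xi> MW K n loss =
     (\<integral>p. pop_loss \<xi> loss (snd p) - emp_loss n loss (fst p) (snd p) \<partial>joint_ZW \<xi> MW K n)"

text \<open>Conditional law of (W, R_i) given Z_i^\<pm> = u in the supersample construction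
  (the supersample pair at index i is fixed to u, everything else is integrated out).\<close>
definition cond_WR :: "'z measure \<Rightarrow> 'w measure \<Rightarrow> ((nat \<Rightarrow> 'z) \<Rightarrow> 'w measure) \<Rightarrow> nat
    \<Rightarrow> nat \<Rightarrow> 'z \<times> 'z \<Rightarrow> ('w \<times> int) measure" where
  "cond_WR \<xi> MW K n i u =
     (PiM {..<n} (\<lambda>_. \<xi> \<Otimes>\<^sub>M \<xi>) \<Otimes>\<^sub>M PiM {..<n} (\<lambda>_. rad)) \<bind>
       (\<lambda>(zs, rs). K (train n (zs(i := u)) rs) \<bind> (\<lambda>w. return (MW \<Otimes>\<^sub>M rad) (w, rs i)))"

definition cmi_pt :: "'z measure \<Rightarrow> 'w measure \<Rightarrow> ((nat \<Rightarrow> 'z) \<Rightarrow> 'w measure) \<Rightarrow> nat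
    \<Rightarrow> nat \<Rightarrow> 'z \<times> 'z \<Rightarrow> ereal" where
  "cmi_pt \<xi> MW K n i u = mutual_info MW rad (cond_WR \<xi> MW K n i u)"

definition cmi :: "'z measure \<Rightarrow> 'w measure \<Rightarrow> ((nat \<Rightarrow> 'z) \<Rightarrow> 'w measure) \<Rightarrow> nat
    \<Rightarrow> nat \<Rightarrow> ereal" where
  "cmi \<xi> MW K n i = eexp (\<xi> \<Otimes>\<^sub>M \<xi>) (cmi_pt \<xi> MW K n i)"

text \<open>Conditional law of the decoupled pair (W~_i, R~_i) given Z_i^\<pm> = u:
  product of the conditional marginals of W and R_i (conditional independence).\<close>
definition decoupled :: "'z measure \<Rightarrow> 'w measure \<Rightarrow> ((nat \<Rightarrow> 'z) \<Rightarrow> 'w measure) \<Rightarrow> nat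
    \<Rightarrow> nat \<Rightarrow> 'z \<times> 'z \<Rightarrow> ('w \<times> int) measure" where
  "decoupled \<xi> MW K n i u =
     (let P = cond_WR \<xi> MW K n i u in distr P MW fst \<Otimes>\<^sub>M distr P rad snd)"

definition law_G :: "'z measure \<Rightarrow> 'w measure \<Rightarrow> ((nat \<Rightarrow> 'z) \<Rightarrow> 'w measure) \<Rightarrow> nat
    \<Rightarrow> ('w \<Rightarrow> 'z \<Rightarrow> real) \<Rightarrow> nat \<Rightarrow> 'z \<times> 'z \<Rightarrow> real measure" where
  "law_G \<xi> MW K n loss i u =
     distr (decoupled \<xi> MW K n i u) borel
       (\<lambda>(w, r). real_of_int r * (loss w (fst u) - loss w (snd u)))"

end

(*
  Fix i and condition on the i-th supersample pair Z_i^+- = u. The element of the pair not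
  selected by R_i is a test sample independent of (Z_[n], W), so the contribution of the i-th
  training example to the generalization gap is the average over u of the mean of
  R_i (l(W, Z_i^-) - l(W, Z_i^+)) under the conditional law P_u of (W, R_i). Under the
  decoupled law Q_u = P_{W|u} x Rademacher this quantity is centred, and the Donsker-Varadhan
  inequality t E_P[G] <= D(P || Q) + ln E_Q[exp (t G)] gives, after dividing by t > 0 and
  minimising over t, the bound psi*^-1(I_u(W; R_i)). The second inequality is Jensen's
  inequality for the concave map (eta, psi) |-> inf_t (eta + psi t) / t.
*)

theory Submission
  imports Defs
begin

section \<open>Integrals, kernels and product measures\<close>

lemma enn2ereal_eq_ereal_enn2real: "x \<noteq> \<infinity> \<Longrightarrow> enn2ereal x = ereal (enn2real x)"
  by (cases x rule: ennreal_cases) auto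

lemma nn_integral_add_le:
  assumes [measurable]: "g \<in> borel_measurable M"
  shows "(\<integral>\<^sup>+x. f x + g x \<partial>M) \<le> (\<integral>\<^sup>+x. f x \<partial>M) + (\<integral>\<^sup>+x. g x \<partial>M)"
  unfolding nn_integral_def_finite[of M "\<lambda>x. f x + g x"]
proof (rule SUP_least, clarify)
  fix s assume s: "simple_function M s" "s \<le> (\<lambda>x. f x + g x)" "\<forall>x. s x < top"
  have [measurable]: "s \<in> borel_measurable M"
    using s(1) by (rule borel_measurable_simple_function)
  have s_minus_g: "s x - g x \<le> f x" for x
  proof -
    have "s x \<le> f x + g x" "s x < top"
      using s(2,3) by (auto simp: le_fun_def)
    then show ?thesis by (simp add: leI less_diff_eq_ennreal)
  qed
  have "integral\<^sup>S M s = (\<integral>\<^sup>+x. s x \<partial>M)"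
    using s(1) by (simp add: nn_integral_eq_simple_integral)
  also have "\<dots> \<le> (\<integral>\<^sup>+x. (s x - g x) + g x \<partial>M)"
    by (intro nn_integral_mono) (auto simp: diff_add_self_ennreal)
  also have "\<dots> = (\<integral>\<^sup>+x. s x - g x \<partial>M) + (\<integral>\<^sup>+x. g x \<partial>M)"
    by (intro nn_integral_add) auto
  also have "\<dots> \<le> (\<integral>\<^sup>+x. f x \<partial>M) + (\<integral>\<^sup>+x. g x \<partial>M)"
    by (intro add_mono nn_integral_mono s_minus_g) auto
  finally show "integral\<^sup>S M s \<le> (\<integral>\<^sup>+x. f x \<partial>M) + (\<integral>\<^sup>+x. g x \<partial>M)" .
qed

lemma nn_integral_cmult_le: "c * (\<integral>\<^sup>+x. f x \<partial>M) \<le> (\<integral>\<^sup>+x. c * f x \<partial>M)"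
  unfolding nn_integral_def[of M f] SUP_mult_left_ennreal
proof (rule SUP_least, clarify)
  fix s assume s: "simple_function M s" "s \<le> f"
  have "c * integral\<^sup>S M s = (\<integral>\<^sup>+x. c * s x \<partial>M)"
    using s(1) by (simp add: nn_integral_eq_simple_integral)
  also have "\<dots> \<le> (\<integral>\<^sup>+x. c * f x \<partial>M)"
    using s(2) by (intro nn_integral_mono mult_left_mono) (auto simp: le_fun_def)
  finally show "c * integral\<^sup>S M s \<le> (\<integral>\<^sup>+x. c * f x \<partial>M)" .
qed

lemma eexp_eq_nn_integral:
  assumes "\<And>x. x \<in> space M \<Longrightarrow> 0 \<le> f x"
  shows "eexp M f = enn2ereal (\<integral>\<^sup>+x. e2ennreal (f x) \<partial>M)"
proof -
  have "(\<integral>\<^sup>+x. e2ennreal (- f x) \<partial>M) = 0"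
    using assms by (subst nn_integral_cong[where v = "\<lambda>_. 0"]) (auto intro: e2ennreal_neg)
  then show ?thesis unfolding eexp_def by (simp add: zero_ennreal.rep_eq)
qed

lemma integral_le_eexp:
  fixes L \<phi> :: "'a \<Rightarrow> real"
  assumes L: "integrable M L" and [measurable]: "\<phi> \<in> borel_measurable M"
    and le: "\<And>x. x \<in> space M \<Longrightarrow> L x \<le> \<phi> x"
  shows "ereal (integral\<^sup>L M L) \<le> eexp M (\<lambda>x. ereal (\<phi> x))"
proof -
  have "(\<integral>\<^sup>+x. ennreal (- \<phi> x) \<partial>M) \<le> (\<integral>\<^sup>+x. ennreal (- L x) \<partial>M)"
    by (intro nn_integral_mono) (auto intro!: ennreal_leI simp: le)
  moreover have "(\<integral>\<^sup>+x. ennreal (- L x) \<partial>M) \<noteq> \<infinity>"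
    using L unfolding real_integrable_def by auto
  ultimately have neg_fin: "(\<integral>\<^sup>+x. ennreal (- \<phi> x) \<partial>M) \<noteq> \<infinity>"
    by (metis infinity_ennreal_def neq_top_trans)
  have eexp_\<phi>: "eexp M (\<lambda>x. ereal (\<phi> x)) =
      enn2ereal (\<integral>\<^sup>+x. ennreal (\<phi> x) \<partial>M) - ereal (enn2real (\<integral>\<^sup>+x. ennreal (- \<phi> x) \<partial>M))"
    unfolding eexp_def by (simp add: enn2ereal_eq_ereal_enn2real[OF neg_fin])
  show ?thesis
  proof (cases "(\<integral>\<^sup>+x. ennreal (\<phi> x) \<partial>M) = \<infinity>")
    case True
    then show ?thesis unfolding eexp_\<phi> by simp
  next
    case False
    then have \<phi>: "integrable M \<phi>"
      using neg_fin unfolding real_integrable_def by auto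
    have "integral\<^sup>L M L \<le> integral\<^sup>L M \<phi>"
      using L \<phi> le by (intro integral_mono) auto
    then show ?thesis
      unfolding eexp_\<phi> enn2ereal_eq_ereal_enn2real[OF False] real_lebesgue_integral_def[OF \<phi>]
      by simp
  qed
qed

lemma integral_le_eexp_nonneg:
  fixes L :: "'a \<Rightarrow> real"
  assumes L: "integrable M L"
    and le: "\<And>x. x \<in> space M \<Longrightarrow> ereal (L x) \<le> \<phi> x"
    and nonneg: "\<And>x. x \<in> space M \<Longrightarrow> 0 \<le> \<phi> x"
  shows "ereal (integral\<^sup>L M L) \<le> eexp M \<phi>"
proof -
  have fin: "(\<integral>\<^sup>+x. ennreal (L x) \<partial>M) \<noteq> \<infinity>"
    using L unfolding real_integrable_def by auto
  have "integral\<^sup>L M L \<le> enn2real (\<integral>\<^sup>+x. ennreal (L x) \<partial>M)"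
    unfolding real_lebesgue_integral_def[OF L] by simp
  then have "ereal (integral\<^sup>L M L) \<le> enn2ereal (\<integral>\<^sup>+x. ennreal (L x) \<partial>M)"
    by (simp add: enn2ereal_eq_ereal_enn2real[OF fin])
  also have "\<dots> \<le> enn2ereal (\<integral>\<^sup>+x. e2ennreal (\<phi> x) \<partial>M)"
    using le by (simp add: less_eq_ennreal.rep_eq[symmetric] nn_integral_mono e2ennreal_mono[of "ereal _", simplified])
  also have "\<dots> = eexp M \<phi>"
    using nonneg by (rule eexp_eq_nn_integral[symmetric])
  finally show ?thesis .
qed

lemma integrable_enn2real_nn_integral:
  assumes p[measurable]: "p \<in> borel_measurable M" and fin: "(\<integral>\<^sup>+x. p x \<partial>M) \<noteq> \<infinity>"
  shows "integrable M (\<lambda>x. enn2real (p x))"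
    and "(\<integral>x. enn2real (p x) \<partial>M) = enn2real (\<integral>\<^sup>+x. p x \<partial>M)"
proof -
  have "AE x in M. p x \<noteq> \<infinity>"
    using nn_integral_PInf_AE[OF p fin] by simp
  then have eq: "(\<integral>\<^sup>+x. ennreal (enn2real (p x)) \<partial>M) = (\<integral>\<^sup>+x. p x \<partial>M)"
    by (intro nn_integral_cong_AE) (auto simp: ennreal_enn2real_if less_top)
  show "integrable M (\<lambda>x. enn2real (p x))"
    using fin eq by (intro integrableI_nonneg) (auto simp: less_top)
  show "(\<integral>x. enn2real (p x) \<partial>M) = enn2real (\<integral>\<^sup>+x. p x \<partial>M)"
    using eq by (subst integral_eq_nn_integral) auto
qed

text \<open>The library's \<open>integral_bind\<close> requires a bounded integrand; for a Markov kernel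
  integrability of the integrand on the mixture suffices.\<close>

lemma
  fixes f :: "'b \<Rightarrow> real"
  assumes N[measurable]: "N \<in> measurable M (prob_algebra B)" and [measurable]: "f \<in> borel_measurable B"
    and "prob_space M" and int: "integrable (M \<bind> N) f"
  shows integrable_bind_kernel: "integrable M (\<lambda>x. \<integral>y. f y \<partial>N x)"
    and integral_bind_kernel: "integral\<^sup>L (M \<bind> N) f = (\<integral>x. \<integral>y. f y \<partial>N x \<partial>M)"
proof -
  interpret prob_space M by fact
  have N'[measurable]: "N \<in> measurable M (subprob_algebra B)"
    using N by (rule measurable_prob_algebraD)
  define p where "p x = (\<integral>\<^sup>+y. ennreal (f y) \<partial>N x)" for x
  define q where "q x = (\<integral>\<^sup>+y. ennreal (- f y) \<partial>N x)" for x
  have p_meas[measurable]: "p \<in> borel_measurable M" and q_meas[measurable]: "q \<in> borel_measurable M"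
    unfolding p_def q_def
    by (rule measurable_compose[OF N' nn_integral_measurable_subprob_algebra]; measurable)+
  have bind_p: "(\<integral>\<^sup>+y. ennreal (f y) \<partial>(M \<bind> N)) = (\<integral>\<^sup>+x. p x \<partial>M)"
    and bind_q: "(\<integral>\<^sup>+y. ennreal (- f y) \<partial>(M \<bind> N)) = (\<integral>\<^sup>+x. q x \<partial>M)"
    unfolding p_def q_def by (rule nn_integral_bind[OF _ N']; measurable)+
  have p_fin: "(\<integral>\<^sup>+x. p x \<partial>M) \<noteq> \<infinity>" and q_fin: "(\<integral>\<^sup>+x. q x \<partial>M) \<noteq> \<infinity>"
    using int unfolding real_integrable_def bind_p bind_q by auto
  have ae: "AE x in M. (\<integral>y. f y \<partial>N x) = enn2real (p x) - enn2real (q x)"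
    using AE_space nn_integral_PInf_AE[OF p_meas p_fin] nn_integral_PInf_AE[OF q_meas q_fin]
  proof eventually_elim
    case (elim x)
    then have "sets (N x) = sets B"
      using measurable_space[OF N'] by (simp add: space_subprob_algebra)
    then have [measurable]: "f \<in> borel_measurable (N x)"
      by (simp cong: measurable_cong_sets)
    have "integrable (N x) f"
      using elim unfolding real_integrable_def p_def q_def by auto
    then show ?case unfolding p_def q_def by (rule real_lebesgue_integral_def)
  qed
  note p = integrable_enn2real_nn_integral[of p M] and q = integrable_enn2real_nn_integral[of q M]
  show "integrable M (\<lambda>x. \<integral>y. f y \<partial>N x)"
    using p q p_fin q_fin ae by (subst integrable_cong_AE[OF _ _ ae]) auto
  have "(\<integral>x. \<integral>y. f y \<partial>N x \<partial>M) = (\<integral>x. enn2real (p x) - enn2real (q x) \<partial>M)"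
    using ae by (intro integral_cong_AE) auto
  also have "\<dots> = enn2real (\<integral>\<^sup>+x. p x \<partial>M) - enn2real (\<integral>\<^sup>+x. q x \<partial>M)"
    using p q p_fin q_fin by simp
  also have "\<dots> = integral\<^sup>L (M \<bind> N) f"
    using real_lebesgue_integral_def[OF int] bind_p bind_q by simp
  finally show "integral\<^sup>L (M \<bind> N) f = (\<integral>x. \<integral>y. f y \<partial>N x \<partial>M)" ..
qed

lemma (in prob_space) distr_pair_snd:
  assumes "sigma_finite_measure N"
  shows "distr (M \<Otimes>\<^sub>M N) N snd = N"
proof (intro measure_eqI)
  interpret N: sigma_finite_measure N by fact
  fix A assume A: "A \<in> sets (distr (M \<Otimes>\<^sub>M N) N snd)"
  then have "emeasure (distr (M \<Otimes>\<^sub>M N) N snd) A = emeasure (M \<Otimes>\<^sub>M N) (space M \<times> A)"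
    by (auto simp: emeasure_distr space_pair_measure dest: sets.sets_into_space
        intro!: arg_cong2[where f=emeasure])
  with A show "emeasure (distr (M \<Otimes>\<^sub>M N) N snd) A = emeasure N A"
    by (simp add: N.emeasure_pair_measure_Times emeasure_space_1)
qed simp

text \<open>For fixed \<open>B\<close>, the set function \<open>E \<mapsto> D (E \<times> B)\<close> is a measure (restrict \<open>D\<close> to
  \<open>A\<^sup>I \<times> B\<close> and project), hence determined by its values on boxes.\<close>

lemma pair_PiM_eqI:
  fixes D :: "(('i \<Rightarrow> 'a) \<times> 'b) measure"
  assumes I: "finite I" and "prob_space M" "prob_space N" "prob_space D"
    and sets_D: "sets D = sets (PiM I (\<lambda>_. M) \<Otimes>\<^sub>M N)"
    and box: "\<And>A B. (\<And>i. i \<in> I \<Longrightarrow> A i \<in> sets M) \<Longrightarrow> B \<in> sets N \<Longrightarrow>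
      emeasure D (Pi\<^sub>E I A \<times> B) = emeasure N B * (\<Prod>i\<in>I. emeasure M (A i))"
  shows "PiM I (\<lambda>_. M) \<Otimes>\<^sub>M N = D"
proof (rule pair_measure_eqI)
  interpret M: prob_space M by fact
  interpret N: prob_space N by fact
  interpret D: prob_space D by fact
  interpret PiM: product_prob_space "\<lambda>_. M" by unfold_locales
  let ?P = "PiM I (\<lambda>_. M)"
  show "sigma_finite_measure ?P" "sigma_finite_measure N"
    by unfold_locales
  show "sets (?P \<Otimes>\<^sub>M N) = sets D" by (fact sets_D[symmetric])
  have space_D: "space D = space ?P \<times> space N"
    using sets_eq_imp_space_eq[OF sets_D] by (simp add: space_pair_measure)
  fix E B assume E: "E \<in> sets ?P" and B: "B \<in> sets N"
  let ?DB = "distr (density D (indicator (space ?P \<times> B))) ?P fst"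
  have fst: "fst \<in> D \<rightarrow>\<^sub>M ?P"
    by (subst measurable_cong_sets[OF sets_D refl]) simp
  have "space ?P \<times> B \<in> sets D"
    using B sets_D by simp
  then have [measurable]: "indicator (space ?P \<times> B) \<in> borel_measurable D"
    by simp
  have DB: "emeasure ?DB E' = emeasure D (E' \<times> B)" if E': "E' \<in> sets ?P" for E'
  proof -
    have "emeasure ?DB E' = emeasure (density D (indicator (space ?P \<times> B))) (fst -` E' \<inter> space D)"
      using fst E' by (subst emeasure_distr) (auto cong: measurable_cong_sets)
    also have "\<dots> = (\<integral>\<^sup>+x. indicator (space ?P \<times> B) x * indicator (fst -` E' \<inter> space D) x \<partial>D)"
      using measurable_sets[OF fst E'] by (subst emeasure_density) auto
    also have "\<dots> = (\<integral>\<^sup>+x. indicator (E' \<times> B) x \<partial>D)"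
      using sets.sets_into_space[OF E'] by (intro nn_integral_cong) (auto simp: space_D indicator_def)
    also have "\<dots> = emeasure D (E' \<times> B)"
      using E' B sets_D by (subst nn_integral_indicator) auto
    finally show ?thesis .
  qed
  have "?DB = density ?P (\<lambda>_. emeasure N B)"
  proof (rule measure_eqI_PiM_finite[where I=I and M="\<lambda>_. M"])
    fix A assume A: "\<And>i. i \<in> I \<Longrightarrow> A i \<in> sets M"
    then have "Pi\<^sub>E I A \<in> sets ?P"
      using I by (auto intro!: sets_PiM_I_finite)
    moreover have "emeasure ?P (Pi\<^sub>E I A) = (\<Prod>i\<in>I. emeasure M (A i))"
      using A I by (subst PiM.emeasure_PiM) auto
    ultimately show "emeasure ?DB (Pi\<^sub>E I A) = emeasure (density ?P (\<lambda>_. emeasure N B)) (Pi\<^sub>E I A)"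
      using DB box[OF A B] by (simp add: emeasure_density_const)
  next
    show "range (\<lambda>_. space ?P) \<subseteq> prod_algebra I (\<lambda>_. M)"
      by (auto simp: space_PiM intro!: prod_algebraI_finite I)
    have "emeasure ?DB (space ?P) = emeasure D (space ?P \<times> B)"
      using DB[of "space ?P"] by simp
    then show "emeasure ?DB (space ?P) \<noteq> \<infinity>" for k :: nat
      by simp
  qed (use I in auto)
  then show "emeasure ?P E * emeasure N B = emeasure D (E \<times> B)"
    using DB[OF E] E by (simp add: emeasure_density_const mult.commute)
qed

lemma (in pair_prob_space) bind_pair_measure:
  assumes C: "(\<lambda>(x, y). C x y) \<in> M1 \<Otimes>\<^sub>M M2 \<rightarrow>\<^sub>M subprob_algebra N"
  shows "(M1 \<Otimes>\<^sub>M M2) \<bind> (\<lambda>(x, y). C x y) = M1 \<bind> (\<lambda>x. M2 \<bind> (\<lambda>y. C x y))"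
proof -
  let ?pair = "\<lambda>x. M2 \<bind> (\<lambda>y. return (M1 \<Otimes>\<^sub>M M2) (x, y))"
  have pair: "?pair \<in> M1 \<rightarrow>\<^sub>M subprob_algebra (M1 \<Otimes>\<^sub>M M2)"
    by (rule measurable_bind[where N=M2]) (auto intro!: measurable_const M2.M_in_subprob simp: return_measurable)
  have "(M1 \<Otimes>\<^sub>M M2) \<bind> (\<lambda>(x, y). C x y) = (M1 \<bind> ?pair) \<bind> (\<lambda>(x, y). C x y)"
    by (rule arg_cong[where f="\<lambda>M. M \<bind> (\<lambda>(x, y). C x y)"], rule pair_measure_eq_bind)
  also have "\<dots> = M1 \<bind> (\<lambda>x. ?pair x \<bind> (\<lambda>(x, y). C x y))"
    by (rule bind_assoc[OF pair C])
  also have "\<dots> = M1 \<bind> (\<lambda>x. M2 \<bind> (\<lambda>y. C x y))"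
  proof (rule bind_cong[OF refl])
    fix x assume x: "x \<in> space M1"
    have "?pair x \<bind> (\<lambda>(x, y). C x y) = M2 \<bind> (\<lambda>y. return (M1 \<Otimes>\<^sub>M M2) (x, y) \<bind> (\<lambda>(x, y). C x y))"
      using x by (intro bind_assoc[OF _ C]) (auto simp: return_measurable)
    also have "\<dots> = M2 \<bind> (\<lambda>y. C x y)"
      using x by (intro bind_cong refl) (auto simp: bind_return[OF C] space_pair_measure)
    finally show "?pair x \<bind> (\<lambda>(x, y). C x y) = M2 \<bind> (\<lambda>y. C x y)" .
  qed
  finally show ?thesis .
qed

section \<open>The Donsker--Varadhan inequality\<close>

lemma mult_le_entropy_conjugate:
  fixes f y :: real
  assumes "0 \<le> f"
  shows "f * y \<le> f * ln f - f + exp y"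
proof (cases "f = 0")
  case False
  then have "f > 0" using assms by simp
  have "1 + (y - ln f) \<le> exp (y - ln f)" by (rule exp_ge_add_one_self)
  also have "\<dots> = exp y / f" using \<open>f > 0\<close> by (simp add: exp_diff)
  finally have "f * (1 + (y - ln f)) \<le> exp y" using \<open>f > 0\<close> by (simp add: field_simps)
  then show ?thesis by (simp add: algebra_simps)
qed simp

text \<open>Integrate \<open>f (h - c) + f - e\<^sup>h\<^sup>-\<^sup>c \<le> f ln f\<close> (Fenchel--Young for \<open>x ln x\<close>), where
  \<open>c = ln z\<close> normalises \<open>e\<^sup>h\<^sup>-\<^sup>c\<close>.\<close>

lemma integral_mult_le_entropy:
  fixes f h :: "'a \<Rightarrow> real"
  assumes [measurable]: "f \<in> borel_measurable Q" "h \<in> borel_measurable Q"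
    and f_nonneg: "\<And>x. 0 \<le> f x" and f: "integrable Q f" and f1: "integral\<^sup>L Q f = 1"
    and fh: "integrable Q (\<lambda>x. f x * h x)"
    and Z: "(\<integral>\<^sup>+x. ennreal (exp (h x)) \<partial>Q) = ennreal z" and "z > 0"
  shows "ereal (\<integral>x. f x * h x \<partial>Q) \<le> eexp Q (\<lambda>x. ereal (f x * ln (f x))) + ereal (ln z)"
proof -
  define c where "c = ln z"
  define e where "e x = exp (h x - c)" for x
  have [measurable]: "e \<in> borel_measurable Q" unfolding e_def by measurable
  have "(\<integral>\<^sup>+x. ennreal (e x) \<partial>Q) = (\<integral>\<^sup>+x. ennreal (exp (h x)) * ennreal (1 / z) \<partial>Q)"
    unfolding e_def c_def using \<open>z > 0\<close>
    by (intro nn_integral_cong) (simp add: exp_diff ennreal_mult[symmetric] divide_inverse)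
  also have "\<dots> = 1"
    using \<open>z > 0\<close> by (subst nn_integral_multc) (auto simp: Z ennreal_mult[symmetric])
  finally have e_nn: "(\<integral>\<^sup>+x. ennreal (e x) \<partial>Q) = 1" .
  have e: "integrable Q e"
    using e_nn unfolding real_integrable_def e_def by (auto simp: ennreal_neg)
  have e1: "integral\<^sup>L Q e = 1"
    using e_nn by (subst integral_eq_nn_integral) (auto simp: e_def)
  define L where "L x = f x * (h x - c) + f x - e x" for x
  have L: "integrable Q L"
    unfolding L_def using fh f e by (auto simp: right_diff_distrib)
  have "integral\<^sup>L Q L = (\<integral>x. f x * h x \<partial>Q) - c * integral\<^sup>L Q f + integral\<^sup>L Q f - integral\<^sup>L Q e"
    unfolding L_def using fh f e by (simp add: right_diff_distrib mult.commute[of _ c])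
  then have L_eq: "integral\<^sup>L Q L = (\<integral>x. f x * h x \<partial>Q) - c"
    using f1 e1 by simp
  have "ereal (integral\<^sup>L Q L) \<le> eexp Q (\<lambda>x. ereal (f x * ln (f x)))"
  proof (rule integral_le_eexp[OF L])
    fix x
    show "L x \<le> f x * ln (f x)"
      using mult_le_entropy_conjugate[OF f_nonneg, of x "h x - c"] by (simp add: L_def e_def)
  qed measurable
  then show ?thesis
    unfolding L_eq c_def by (cases "eexp Q (\<lambda>x. ereal (f x * ln (f x)))") auto
qed

lemma density_enn2real_RN_deriv:
  assumes "prob_space P" "prob_space Q" and sets: "sets P = sets Q" and ac: "absolutely_continuous Q P"
  shows "P = density Q (\<lambda>x. ennreal (enn2real (RN_deriv Q P x)))"
proof -
  interpret Q: prob_space Q by fact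
  interpret P: prob_space P by fact
  have "P = density Q (RN_deriv Q P)"
    using ac sets by (intro Q.density_RN_deriv[symmetric]) auto
  also have "\<dots> = density Q (\<lambda>x. ennreal (enn2real (RN_deriv Q P x)))"
  proof (rule density_cong)
    show "AE x in Q. RN_deriv Q P x = ennreal (enn2real (RN_deriv Q P x))"
      using Q.RN_deriv_finite[OF P.sigma_finite_measure_axioms ac sets]
      by eventually_elim (auto simp: ennreal_enn2real_if less_top)
  qed auto
  finally show ?thesis .
qed

lemma donsker_varadhan:
  fixes h :: "'a \<Rightarrow> real"
  assumes P: "prob_space P" and Q: "prob_space Q" and sets: "sets P = sets Q"
    and [measurable]: "h \<in> borel_measurable Q" and h: "integrable P h"
    and Z: "(\<integral>\<^sup>+x. ennreal (exp (h x)) \<partial>Q) = ennreal z" and "z > 0"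
  shows "ereal (integral\<^sup>L P h) \<le> kl_div P Q + ereal (ln z)"
proof (cases "absolutely_continuous Q P")
  case False
  then show ?thesis unfolding kl_div_def by simp
next
  case ac: True
  interpret P: prob_space P by fact
  define f where "f x = enn2real (RN_deriv Q P x)" for x
  have [measurable]: "f \<in> borel_measurable Q" unfolding f_def by measurable
  have f_nonneg: "0 \<le> f x" for x unfolding f_def by simp
  have P_density: "P = density Q (\<lambda>x. ennreal (f x))"
    unfolding f_def using P Q sets ac by (rule density_enn2real_RN_deriv)
  have integrable_P: "integrable P g \<longleftrightarrow> integrable Q (\<lambda>x. f x * g x)"
    and integral_P: "integral\<^sup>L P g = integral\<^sup>L Q (\<lambda>x. f x * g x)"
    if [measurable]: "g \<in> borel_measurable Q" for g :: "'a \<Rightarrow> real"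
    unfolding P_density by (simp_all add: integrable_density integral_density f_nonneg)
  have "ereal (\<integral>x. f x * h x \<partial>Q) \<le> eexp Q (\<lambda>x. ereal (f x * ln (f x))) + ereal (ln z)"
    using integrable_P[of "\<lambda>_. 1"] integral_P[of "\<lambda>_. 1"] integrable_P[of h] h
      P.prob_space f_nonneg Z \<open>z > 0\<close>
    by (intro integral_mult_le_entropy) simp_all
  moreover have "integral\<^sup>L P h = (\<integral>x. f x * h x \<partial>Q)"
    by (rule integral_P) measurable
  ultimately show ?thesis
    unfolding kl_div_def using ac by (simp add: f_def Let_def)
qed

lemma kl_div_nonneg:
  assumes "prob_space P" "prob_space Q" "sets P = sets Q"
  shows "0 \<le> kl_div P Q"
proof -
  have "ereal (\<integral>x. 0 \<partial>P) \<le> kl_div P Q + ereal (ln 1)"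
    using prob_space.emeasure_space_1[OF assms(2)] by (intro donsker_varadhan[OF assms]) auto
  then show ?thesis by (simp add: zero_ereal_def)
qed

section \<open>Bounds through the inverse convex conjugate\<close>

lemma eln_nonneg: "1 \<le> x \<Longrightarrow> 0 \<le> eln x"
  unfolding eln_def
  by (cases x rule: ennreal_cases) (auto simp: ennreal_1[symmetric] simp del: ennreal_1)

lemma inv_conj_nonneg: "0 \<le> \<eta> \<Longrightarrow> (\<And>t. 0 \<le> \<psi> t) \<Longrightarrow> 0 \<le> inv_conj \<psi> \<eta>"
  unfolding inv_conj_def by (intro INF_greatest zero_le_divide_ereal add_nonneg_nonneg) auto

text \<open>Centring makes \<open>cgf (distr Q borel G) t = ln E\<^sub>Q e\<^sup>t\<^sup>G\<close>. It is stated through the Bochner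
  integral, so it also holds, with the junk value \<open>0\<close>, when \<open>G\<close> is not \<open>Q\<close>-integrable.\<close>

lemma integral_le_inv_conj_cgf:
  fixes G :: "'a \<Rightarrow> real"
  assumes P: "prob_space P" and Q: "prob_space Q" and sets: "sets P = sets Q"
    and [measurable]: "G \<in> borel_measurable Q" and G: "integrable P G"
    and centred: "(\<integral>x. x \<partial>distr Q borel G) = 0"
  shows "ereal (integral\<^sup>L P G) \<le> inv_conj (cgf (distr Q borel G)) (kl_div P Q)"
proof -
  interpret Q: prob_space Q by fact
  have kl: "0 \<le> kl_div P Q"
    using kl_div_nonneg[OF P Q sets] .
  have "ereal (integral\<^sup>L P G) \<le> (kl_div P Q + cgf (distr Q borel G) t) / ereal t"
    if "t > 0" for t
  proof -
    define Z where "Z = (\<integral>\<^sup>+x. ennreal (exp (t * G x)) \<partial>Q)"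
    have cgf_t: "cgf (distr Q borel G) t = eln Z"
      unfolding cgf_def Let_def centred Z_def by (simp add: nn_integral_distr)
    have "Z \<noteq> 0"
    proof
      assume "Z = 0"
      then have "AE x in Q. ennreal (exp (t * G x)) = 0"
        unfolding Z_def by (subst (asm) nn_integral_0_iff_AE) auto
      then show False by simp
    qed
    show ?thesis
    proof (cases Z rule: ennreal_cases)
      case top
      then show ?thesis using kl \<open>t > 0\<close> by (simp add: cgf_t eln_def)
    next
      case (real z)
      with \<open>Z \<noteq> 0\<close> have "z > 0" by auto
      then have "ereal (integral\<^sup>L P (\<lambda>x. t * G x)) \<le> kl_div P Q + ereal (ln z)"
        using G real by (intro donsker_varadhan[OF P Q sets]) (auto simp: Z_def)
      then have "ereal t * ereal (integral\<^sup>L P G) \<le> kl_div P Q + cgf (distr Q borel G) t"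
        using \<open>z > 0\<close> real by (simp add: cgf_t eln_def)
      then show ?thesis using \<open>t > 0\<close> by (subst ereal_le_divide_pos) auto
    qed
  qed
  then show ?thesis
    unfolding inv_conj_def by (intro INF_greatest) auto
qed

lemma mult_inv_conj_le: "t > 0 \<Longrightarrow> ereal t * inv_conj \<psi> \<eta> \<le> \<eta> + \<psi> t"
  unfolding inv_conj_def
  by (subst ereal_le_divide_pos[symmetric]) (auto intro: INF_lower)

text \<open>No measurability of \<open>\<eta>\<close> is assumed (the pointwise mutual information is not known to
  be measurable), hence \<open>nn_integral_add_le\<close> and \<open>nn_integral_cmult_le\<close>.\<close>

lemma eexp_inv_conj_le:
  fixes \<psi> :: "'a \<Rightarrow> real \<Rightarrow> ereal" and \<eta> :: "'a \<Rightarrow> ereal"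
  assumes \<eta>: "\<And>u. u \<in> space M \<Longrightarrow> 0 \<le> \<eta> u"
    and \<psi>: "\<And>u t. u \<in> space M \<Longrightarrow> 0 \<le> \<psi> u t"
    and [measurable]: "\<And>t. (\<lambda>u. e2ennreal (\<psi> u t)) \<in> borel_measurable M"
  shows "eexp M (\<lambda>u. inv_conj (\<psi> u) (\<eta> u)) \<le> inv_conj (\<lambda>t. eexp M (\<lambda>u. \<psi> u t)) (eexp M \<eta>)"
proof -
  let ?B = "\<lambda>u. e2ennreal (inv_conj (\<psi> u) (\<eta> u))" and ?I = "\<lambda>u. e2ennreal (\<eta> u)"
  have B: "eexp M (\<lambda>u. inv_conj (\<psi> u) (\<eta> u)) = enn2ereal (\<integral>\<^sup>+u. ?B u \<partial>M)"
    using \<eta> \<psi> by (intro eexp_eq_nn_integral inv_conj_nonneg) auto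
  have I: "eexp M \<eta> = enn2ereal (\<integral>\<^sup>+u. ?I u \<partial>M)"
    using \<eta> by (rule eexp_eq_nn_integral)
  have C: "eexp M (\<lambda>u. \<psi> u t) = enn2ereal (\<integral>\<^sup>+u. e2ennreal (\<psi> u t) \<partial>M)" for t
    using \<psi> by (intro eexp_eq_nn_integral)
  have "enn2ereal (\<integral>\<^sup>+u. ?B u \<partial>M)
      \<le> (enn2ereal (\<integral>\<^sup>+u. ?I u \<partial>M) + enn2ereal (\<integral>\<^sup>+u. e2ennreal (\<psi> u t) \<partial>M)) / ereal t"
    if "t > 0" for t
  proof -
    let ?C = "\<lambda>u. e2ennreal (\<psi> u t)"
    have pointwise: "ennreal t * ?B u \<le> ?I u + ?C u" if u: "u \<in> space M" for u
      using mult_inv_conj_le[OF \<open>t > 0\<close>, of "\<psi> u" "\<eta> u"] \<open>t > 0\<close> \<eta>[OF u] \<psi>[OF u]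
        inv_conj_nonneg[OF \<eta>[OF u] \<psi>[OF u]]
      unfolding less_eq_ennreal.rep_eq times_ennreal.rep_eq plus_ennreal.rep_eq
      by (simp add: enn2ereal_e2ennreal)
    have "ennreal t * (\<integral>\<^sup>+u. ?B u \<partial>M) \<le> (\<integral>\<^sup>+u. ennreal t * ?B u \<partial>M)"
      by (rule nn_integral_cmult_le)
    also have "\<dots> \<le> (\<integral>\<^sup>+u. ?I u + ?C u \<partial>M)"
      using pointwise by (intro nn_integral_mono) auto
    also have "\<dots> \<le> (\<integral>\<^sup>+u. ?I u \<partial>M) + (\<integral>\<^sup>+u. ?C u \<partial>M)"
      by (rule nn_integral_add_le) measurable
    finally have "ereal t * enn2ereal (\<integral>\<^sup>+u. ?B u \<partial>M)
        \<le> enn2ereal (\<integral>\<^sup>+u. ?I u \<partial>M) + enn2ereal (\<integral>\<^sup>+u. ?C u \<partial>M)"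
      unfolding less_eq_ennreal.rep_eq times_ennreal.rep_eq plus_ennreal.rep_eq using \<open>t > 0\<close> by simp
    then show ?thesis
      using \<open>t > 0\<close> by (subst ereal_le_divide_pos) auto
  qed
  then show ?thesis
    unfolding B I C inv_conj_def[of "\<lambda>t. enn2ereal (\<integral>\<^sup>+u. e2ennreal (\<psi> u t) \<partial>M)"]
    by (intro INF_greatest) auto
qed

section \<open>Rademacher signs\<close>

lemma prob_space_rad: "prob_space rad"
  unfolding rad_def by (rule prob_space_measure_pmf)

lemma sets_rad [simp, measurable_cong]: "sets rad = UNIV"
  and space_rad [simp]: "space rad = UNIV"
  unfolding rad_def by simp_all

lemma pred_rad [measurable]: "Measurable.pred rad P"
  by (subst measurable_cong_sets[of rad "count_space UNIV"]) auto

lemma borel_measurable_rad [measurable]: "g \<in> borel_measurable rad"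
  by (subst measurable_cong_sets[of rad "count_space UNIV"]) auto

lemma AE_rad: "AE r in rad. r \<in> {-1, 1}"
  unfolding rad_def AE_measure_pmf_iff by (simp add: set_pmf_of_set)

lemma integral_rad_sign: "(\<integral>r. real_of_int r \<partial>rad) = 0"
  unfolding rad_def
  by (subst integral_measure_pmf[of "{-1, 1}"]) (auto simp: set_pmf_of_set pmf_of_set)

lemma borel_measurable_cosh [measurable]: "(cosh :: real \<Rightarrow> real) \<in> borel_measurable borel"
  by (intro borel_measurable_continuous_onI continuous_on_cosh continuous_on_id)

lemma nn_integral_rad_exp: "(\<integral>\<^sup>+r. ennreal (exp (t * (real_of_int r * a))) \<partial>rad) = ennreal (cosh (t * a))"
proof -
  have "(\<integral>\<^sup>+r. ennreal (exp (t * (real_of_int r * a))) \<partial>rad)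
      = ennreal (exp (- (t * a))) * ennreal (1 / 2) + ennreal (exp (t * a)) * ennreal (1 / 2)"
    unfolding rad_def by (subst nn_integral_measure_pmf_finite) (auto simp: set_pmf_of_set pmf_of_set)
  also have "\<dots> = ennreal (cosh (t * a))"
    by (subst (1 2) ennreal_mult[symmetric])
      (auto simp: cosh_field_def ennreal_plus[symmetric] simp del: ennreal_plus)
  finally show ?thesis .
qed

section \<open>The supersample construction\<close>

locale supersample =
  fixes \<xi> :: "'z measure" and MW :: "'w measure"
    and K :: "(nat \<Rightarrow> 'z) \<Rightarrow> 'w measure" and loss :: "'w \<Rightarrow> 'z \<Rightarrow> real" and n :: nat
  assumes prob_space_\<xi>: "prob_space \<xi>"
    and n_pos: "n > 0"
    and K_measurable [measurable]: "K \<in> PiM {..<n} (\<lambda>_. \<xi>) \<rightarrow>\<^sub>M prob_algebra MW"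
    and loss_measurable: "(\<lambda>(w, z). loss w z) \<in> borel_measurable (MW \<Otimes>\<^sub>M \<xi>)"
begin

abbreviation "Pairs \<equiv> \<xi> \<Otimes>\<^sub>M \<xi>"
abbreviation "Sample \<equiv> PiM {..<n} (\<lambda>_. \<xi>)"
abbreviation "Supersample \<equiv> PiM {..<n} (\<lambda>_. Pairs)"
abbreviation "Signs \<equiv> PiM {..<n} (\<lambda>_. rad)"
abbreviation "Draws \<equiv> Supersample \<Otimes>\<^sub>M Signs"

lemma prob_space_Pairs: "prob_space Pairs"
  using prob_space_\<xi> by (intro prob_space_pair)

lemma prob_space_Sample: "prob_space Sample"
  using prob_space_\<xi> by (intro prob_space_PiM)

lemma prob_space_Supersample: "prob_space Supersample"
  using prob_space_Pairs by (intro prob_space_PiM)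

lemma prob_space_Signs: "prob_space Signs"
  using prob_space_rad by (intro prob_space_PiM)

lemma prob_space_Draws: "prob_space Draws"
  using prob_space_Supersample prob_space_Signs by (intro prob_space_pair)

lemma measurable_loss [measurable (raw)]:
  assumes "f \<in> M \<rightarrow>\<^sub>M MW" "g \<in> M \<rightarrow>\<^sub>M \<xi>"
  shows "(\<lambda>x. loss (f x) (g x)) \<in> borel_measurable M"
  using measurable_compose[OF measurable_Pair[OF assms] loss_measurable] by simp

lemma measurable_sign [measurable]: "i < n \<Longrightarrow> (\<lambda>a. snd a i) \<in> Draws \<rightarrow>\<^sub>M rad"
  using measurable_compose[OF measurable_snd measurable_component_singleton[of i "{..<n}" "\<lambda>_. rad"]]
  by simp

lemma measurable_train:
  assumes zs[measurable]: "zs \<in> M \<rightarrow>\<^sub>M Supersample" and rs[measurable]: "rs \<in> M \<rightarrow>\<^sub>M Signs"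
  shows "(\<lambda>x. train n (zs x) (rs x)) \<in> M \<rightarrow>\<^sub>M Sample"
proof (rule measurable_PiM_single')
  fix j assume j: "j \<in> {..<n}"
  have [measurable]: "(\<lambda>x. zs x j) \<in> M \<rightarrow>\<^sub>M Pairs"
    using measurable_compose[OF zs measurable_component_singleton[OF j]] by simp
  have [measurable]: "(\<lambda>x. rs x j) \<in> M \<rightarrow>\<^sub>M rad"
    using measurable_compose[OF rs measurable_component_singleton[OF j]] by simp
  have "(\<lambda>x. if rs x j = 1 then snd (zs x j) else fst (zs x j)) \<in> M \<rightarrow>\<^sub>M \<xi>"
    by measurable
  then show "(\<lambda>x. train n (zs x) (rs x) j) \<in> M \<rightarrow>\<^sub>M \<xi>"
    using j by (simp add: train_def)
next
  show "(\<lambda>x. train n (zs x) (rs x)) \<in> space M \<rightarrow> (\<Pi>\<^sub>E i\<in>{..<n}. space \<xi>)"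
  proof
    fix x assume x: "x \<in> space M"
    have "zs x \<in> space Supersample" "rs x \<in> space Signs"
      using x zs rs by (auto simp: measurable_def)
    then show "train n (zs x) (rs x) \<in> (\<Pi>\<^sub>E i\<in>{..<n}. space \<xi>)"
      by (auto simp: train_def space_PiM PiE_iff space_pair_measure extensional_def mem_Times_iff)
  qed
qed

text \<open>The training vector and the unused element of the \<open>i\<close>-th pair when that pair is \<open>u\<close>
  and the other pairs and all signs are given by the draws.\<close>

definition train_at :: "nat \<Rightarrow> ('z \<times> 'z) \<times> (nat \<Rightarrow> 'z \<times> 'z) \<times> (nat \<Rightarrow> int) \<Rightarrow> nat \<Rightarrow> 'z" where
  "train_at i = (\<lambda>(u, a). train n ((fst a)(i := u)) (snd a))"

definition test_at :: "nat \<Rightarrow> ('z \<times> 'z) \<times> (nat \<Rightarrow> 'z \<times> 'z) \<times> (nat \<Rightarrow> int) \<Rightarrow> 'z" where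
  "test_at i = (\<lambda>(u, a). if snd a i = 1 then fst u else snd u)"

lemma measurable_train_at [measurable]: "i < n \<Longrightarrow> train_at i \<in> Pairs \<Otimes>\<^sub>M Draws \<rightarrow>\<^sub>M Sample"
  unfolding train_at_def case_prod_beta'
  by (intro measurable_train measurable_fun_upd[where J="{..<n}"]) auto

lemma measurable_test_at [measurable]: "i < n \<Longrightarrow> test_at i \<in> Pairs \<Otimes>\<^sub>M Draws \<rightarrow>\<^sub>M \<xi>"
  unfolding test_at_def case_prod_beta' by measurable

lemma K_prob:
  assumes "zs \<in> space Sample"
  shows "prob_space (K zs)" and "sets (K zs) = sets MW"
  using measurable_space[OF K_measurable assms] by (auto simp: space_prob_algebra)

lemma K_train_at:
  assumes "i < n" "x \<in> space (Pairs \<Otimes>\<^sub>M Draws)"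
  shows "prob_space (K (train_at i x))" and "sets (K (train_at i x)) = sets MW"
  using K_prob measurable_space[OF measurable_train_at[OF assms(1)] assms(2)] by auto

lemma cond_WR_eq:
  assumes i: "i < n" and u: "u \<in> space Pairs"
  shows "cond_WR \<xi> MW K n i u = Draws \<bind> (\<lambda>a. distr (K (train_at i (u, a))) (MW \<Otimes>\<^sub>M rad) (\<lambda>w. (w, snd a i)))"
  unfolding cond_WR_def
proof (rule bind_cong)
  fix a assume "a \<in> space Draws"
  then have "(u, a) \<in> space (Pairs \<Otimes>\<^sub>M Draws)"
    using u by (simp add: space_pair_measure)
  note K = K_train_at[OF i this]
  have "(\<lambda>w. (w, snd a i)) \<in> K (train_at i (u, a)) \<rightarrow>\<^sub>M MW \<Otimes>\<^sub>M rad"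
    using K(2) by (simp cong: measurable_cong_sets)
  from bind_return_distr'[OF prob_space.not_empty[OF K(1)] this]
  show "(case a of (zs, rs) \<Rightarrow> K (train n (zs(i := u)) rs) \<bind> (\<lambda>w. return (MW \<Otimes>\<^sub>M rad) (w, rs i))) =
      distr (K (train_at i (u, a))) (MW \<Otimes>\<^sub>M rad) (\<lambda>w. (w, snd a i))"
    by (cases a) (simp add: train_at_def)
qed simp

lemma measurable_W_sign_kernel [measurable]:
  "i < n \<Longrightarrow> (\<lambda>(u, a). distr (K (train_at i (u, a))) (MW \<Otimes>\<^sub>M rad) (\<lambda>w. (w, snd a i)))
    \<in> Pairs \<Otimes>\<^sub>M Draws \<rightarrow>\<^sub>M prob_algebra (MW \<Otimes>\<^sub>M rad)"
  unfolding case_prod_beta' by (intro measurable_distr_prob_space2[where M=MW]) measurable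

lemma measurable_cond_WR [measurable]:
  assumes i: "i < n"
  shows "cond_WR \<xi> MW K n i \<in> Pairs \<rightarrow>\<^sub>M prob_algebra (MW \<Otimes>\<^sub>M rad)"
proof -
  have "(\<lambda>u. Draws \<bind> (\<lambda>a. distr (K (train_at i (u, a))) (MW \<Otimes>\<^sub>M rad) (\<lambda>w. (w, snd a i))))
      \<in> Pairs \<rightarrow>\<^sub>M prob_algebra (MW \<Otimes>\<^sub>M rad)"
    using prob_space_Draws i
    by (intro measurable_bind_prob_space2[OF measurable_const]) (auto simp: space_prob_algebra)
  then show ?thesis
    by (rule measurable_cong[THEN iffD1, rotated]) (simp add: cond_WR_eq[OF i])
qed

lemma cond_WR_prob:
  assumes "i < n" "u \<in> space Pairs"
  shows "prob_space (cond_WR \<xi> MW K n i u)" and "sets (cond_WR \<xi> MW K n i u) = sets (MW \<Otimes>\<^sub>M rad)"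
  using measurable_space[OF measurable_cond_WR[OF assms(1)] assms(2)] by (auto simp: space_prob_algebra)

lemma distr_cond_WR_sign:
  assumes i: "i < n" and u: "u \<in> space Pairs"
  shows "distr (cond_WR \<xi> MW K n i u) rad snd = rad"
proof -
  interpret Draws: prob_space Draws by (rule prob_space_Draws)
  have kernel: "(\<lambda>a. distr (K (train_at i (u, a))) (MW \<Otimes>\<^sub>M rad) (\<lambda>w. (w, snd a i)))
      \<in> Draws \<rightarrow>\<^sub>M subprob_algebra (MW \<Otimes>\<^sub>M rad)"
    using measurable_Pair2[OF measurable_W_sign_kernel[OF i] u] by (auto intro: measurable_prob_algebraD)
  have "distr (cond_WR \<xi> MW K n i u) rad snd
      = Draws \<bind> (\<lambda>a. distr (distr (K (train_at i (u, a))) (MW \<Otimes>\<^sub>M rad) (\<lambda>w. (w, snd a i))) rad snd)"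
    unfolding cond_WR_eq[OF i u] by (rule distr_bind[OF kernel Draws.not_empty]) simp
  also have "\<dots> = Draws \<bind> (\<lambda>a. return rad (snd a i))"
  proof (rule bind_cong[OF refl])
    fix a assume "a \<in> space Draws"
    then have "(u, a) \<in> space (Pairs \<Otimes>\<^sub>M Draws)"
      using u by (simp add: space_pair_measure)
    note K = K_train_at[OF i this]
    interpret prob_space "K (train_at i (u, a))" by (rule K(1))
    have "(\<lambda>w. (w, snd a i)) \<in> K (train_at i (u, a)) \<rightarrow>\<^sub>M MW \<Otimes>\<^sub>M rad"
      using K(2) by (simp cong: measurable_cong_sets)
    then show "distr (distr (K (train_at i (u, a))) (MW \<Otimes>\<^sub>M rad) (\<lambda>w. (w, snd a i))) rad snd
        = return rad (snd a i)"
      by (subst distr_distr) (auto simp: comp_def)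
  qed
  also have "\<dots> = distr Draws rad (\<lambda>a. snd a i)"
    using i by (intro bind_return_distr' Draws.not_empty) measurable
  also have "\<dots> = distr (distr Draws Signs snd) rad (\<lambda>r. r i)"
    using i by (subst distr_distr) (auto simp: comp_def)
  also have "distr Draws Signs snd = Signs"
    using prob_space_Signs prob_space_Supersample
    by (intro prob_space.distr_pair_snd prob_space_imp_sigma_finite)
  also have "distr Signs rad (\<lambda>r. r i) = rad"
    using i prob_space_rad by (intro distr_PiM_component) auto
  finally show ?thesis .
qed

definition cond_W :: "nat \<Rightarrow> 'z \<times> 'z \<Rightarrow> 'w measure" where
  "cond_W i u = distr (cond_WR \<xi> MW K n i u) MW fst"

lemma measurable_cond_W [measurable]: "i < n \<Longrightarrow> cond_W i \<in> Pairs \<rightarrow>\<^sub>M subprob_algebra MW"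
  unfolding cond_W_def
  by (rule measurable_compose[OF measurable_prob_algebraD[OF measurable_cond_WR] measurable_distr])
    measurable

lemma cond_W_prob:
  assumes i: "i < n" and u: "u \<in> space Pairs"
  shows "prob_space (cond_W i u)" and "sets (cond_W i u) = sets MW"
proof -
  have "fst \<in> cond_WR \<xi> MW K n i u \<rightarrow>\<^sub>M MW"
    using cond_WR_prob(2)[OF i u] by (simp cong: measurable_cong_sets)
  then show "prob_space (cond_W i u)"
    unfolding cond_W_def by (rule prob_space.prob_space_distr[OF cond_WR_prob(1)[OF i u]])
qed (simp add: cond_W_def)

lemma decoupled_eq:
  assumes "i < n" "u \<in> space Pairs"
  shows "decoupled \<xi> MW K n i u = cond_W i u \<Otimes>\<^sub>M rad"
  unfolding decoupled_def cond_W_def Let_def distr_cond_WR_sign[OF assms] ..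

lemma decoupled_prob:
  assumes "i < n" "u \<in> space Pairs"
  shows "prob_space (decoupled \<xi> MW K n i u)" and "sets (decoupled \<xi> MW K n i u) = sets (MW \<Otimes>\<^sub>M rad)"
  unfolding decoupled_eq[OF assms] using cond_W_prob[OF assms] prob_space_rad
  by (auto intro!: prob_space_pair sets_pair_measure_cong)

lemma cmi_pt_eq_kl_div: "cmi_pt \<xi> MW K n i u = kl_div (cond_WR \<xi> MW K n i u) (decoupled \<xi> MW K n i u)"
  unfolding cmi_pt_def mutual_info_def decoupled_def Let_def ..

lemma cmi_pt_nonneg:
  assumes "i < n" "u \<in> space Pairs"
  shows "0 \<le> cmi_pt \<xi> MW K n i u"
  unfolding cmi_pt_eq_kl_div using cond_WR_prob[OF assms] decoupled_prob[OF assms]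
  by (intro kl_div_nonneg) auto

definition sign_gap :: "'z \<times> 'z \<Rightarrow> 'w \<times> int \<Rightarrow> real" where
  "sign_gap u = (\<lambda>(w, r). real_of_int r * (loss w (fst u) - loss w (snd u)))"

lemma law_G_eq: "law_G \<xi> MW K n loss i u = distr (decoupled \<xi> MW K n i u) borel (sign_gap u)"
  unfolding law_G_def sign_gap_def ..

lemma measurable_sign_gap [measurable]:
  assumes "u \<in> space Pairs"
  shows "sign_gap u \<in> borel_measurable (MW \<Otimes>\<^sub>M rad)"
proof -
  have [measurable]: "(\<lambda>_. fst u) \<in> MW \<Otimes>\<^sub>M rad \<rightarrow>\<^sub>M \<xi>" "(\<lambda>_. snd u) \<in> MW \<Otimes>\<^sub>M rad \<rightarrow>\<^sub>M \<xi>"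
    using assms by (auto simp: space_pair_measure)
  show ?thesis
    unfolding sign_gap_def case_prod_beta' by measurable
qed

lemma integral_law_G:
  assumes i: "i < n" and u: "u \<in> space Pairs"
  shows "(\<integral>x. x \<partial>law_G \<xi> MW K n loss i u) = 0"
proof -
  interpret W: prob_space "cond_W i u" by (rule cond_W_prob[OF i u])
  interpret pair_sigma_finite "cond_W i u" rad
    using prob_space_rad by (simp add: W.sigma_finite_measure_axioms pair_sigma_finite_def
        prob_space_imp_sigma_finite)
  have [measurable]: "sign_gap u \<in> borel_measurable (cond_W i u \<Otimes>\<^sub>M rad)"
    using measurable_sign_gap[OF u] cond_W_prob(2)[OF i u] by (simp cong: measurable_cong_sets)
  have "(\<integral>x. x \<partial>law_G \<xi> MW K n loss i u) = integral\<^sup>L (cond_W i u \<Otimes>\<^sub>M rad) (sign_gap u)"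
    unfolding law_G_eq decoupled_eq[OF i u] by (subst integral_distr) auto
  also have "\<dots> = 0"
  proof (cases "integrable (cond_W i u \<Otimes>\<^sub>M rad) (sign_gap u)")
    case True
    then have "integral\<^sup>L (cond_W i u \<Otimes>\<^sub>M rad) (sign_gap u) = (\<integral>w. \<integral>r. sign_gap u (w, r) \<partial>rad \<partial>cond_W i u)"
      by (rule integral_fst'[symmetric])
    then show ?thesis by (simp add: sign_gap_def integral_rad_sign)
  qed (simp add: not_integrable_integral_eq)
  finally show ?thesis .
qed

lemma nn_integral_exp_law_G:
  assumes i: "i < n" and u: "u \<in> space Pairs"
  shows "(\<integral>\<^sup>+x. ennreal (exp (t * x)) \<partial>law_G \<xi> MW K n loss i u)
    = (\<integral>\<^sup>+w. ennreal (cosh (t * (loss w (fst u) - loss w (snd u)))) \<partial>cond_W i u)"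
proof -
  interpret prob_space rad by (rule prob_space_rad)
  have [measurable]: "sign_gap u \<in> borel_measurable (cond_W i u \<Otimes>\<^sub>M rad)"
    using measurable_sign_gap[OF u] cond_W_prob(2)[OF i u] by (simp cong: measurable_cong_sets)
  have "(\<integral>\<^sup>+x. ennreal (exp (t * x)) \<partial>law_G \<xi> MW K n loss i u)
      = (\<integral>\<^sup>+x. ennreal (exp (t * sign_gap u x)) \<partial>(cond_W i u \<Otimes>\<^sub>M rad))"
    unfolding law_G_eq decoupled_eq[OF i u] by (subst nn_integral_distr) auto
  also have "\<dots> = (\<integral>\<^sup>+w. \<integral>\<^sup>+r. ennreal (exp (t * sign_gap u (w, r))) \<partial>rad \<partial>cond_W i u)"
    by (subst nn_integral_fst[symmetric]) auto
  finally show ?thesis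
    by (simp add: sign_gap_def nn_integral_rad_exp)
qed

lemma nn_integral_exp_law_G_ge_1:
  assumes i: "i < n" and u: "u \<in> space Pairs"
  shows "1 \<le> (\<integral>\<^sup>+x. ennreal (exp (t * x)) \<partial>law_G \<xi> MW K n loss i u)"
proof -
  interpret prob_space "cond_W i u" by (rule cond_W_prob[OF i u])
  have "1 = (\<integral>\<^sup>+w. 1 \<partial>cond_W i u)"
    by (simp add: emeasure_space_1)
  also have "\<dots> \<le> (\<integral>\<^sup>+w. ennreal (cosh (t * (loss w (fst u) - loss w (snd u)))) \<partial>cond_W i u)"
    using cosh_real_ge_1 by (intro nn_integral_mono) simp
  finally show ?thesis
    unfolding nn_integral_exp_law_G[OF i u] .
qed

lemma cgf_law_G:
  assumes "i < n" "u \<in> space Pairs"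
  shows "cgf (law_G \<xi> MW K n loss i u) t = eln (\<integral>\<^sup>+x. ennreal (exp (t * x)) \<partial>law_G \<xi> MW K n loss i u)"
  unfolding cgf_def Let_def integral_law_G[OF assms] by simp

lemma cgf_law_G_nonneg:
  assumes "i < n" "u \<in> space Pairs"
  shows "0 \<le> cgf (law_G \<xi> MW K n loss i u) t"
  unfolding cgf_law_G[OF assms] by (rule eln_nonneg[OF nn_integral_exp_law_G_ge_1[OF assms]])

lemma measurable_cgf_law_G:
  assumes i: "i < n"
  shows "(\<lambda>u. e2ennreal (cgf (law_G \<xi> MW K n loss i u) t)) \<in> borel_measurable Pairs"
proof -
  define Y where
    "Y u = (\<integral>\<^sup>+w. ennreal (cosh (t * (loss w (fst u) - loss w (snd u)))) \<partial>cond_W i u)" for u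
  have [measurable]: "Y \<in> borel_measurable Pairs"
    unfolding Y_def by (rule nn_integral_measurable_subprob_algebra2[OF _ measurable_cond_W[OF i]]) measurable
  have cgf_eq: "e2ennreal (cgf (law_G \<xi> MW K n loss i u) t)
      = (if Y u = \<infinity> then \<infinity> else ennreal (ln (enn2real (Y u))))"
    if u: "u \<in> space Pairs" for u
  proof -
    have "1 \<le> Y u"
      using nn_integral_exp_law_G_ge_1[OF i u] unfolding nn_integral_exp_law_G[OF i u] Y_def .
    moreover have "cgf (law_G \<xi> MW K n loss i u) t = eln (Y u)"
      unfolding cgf_law_G[OF i u] nn_integral_exp_law_G[OF i u] Y_def ..
    ultimately show ?thesis
      by (cases "Y u" rule: ennreal_cases) (auto simp: eln_def ennreal_1[symmetric] simp del: ennreal_1)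
  qed
  have "(\<lambda>u. if Y u = \<infinity> then \<infinity> else ennreal (ln (enn2real (Y u)))) \<in> borel_measurable Pairs"
    by measurable
  then show ?thesis
    by (rule measurable_cong[THEN iffD1, rotated]) (simp add: cgf_eq)
qed

definition loss_gap :: "'z \<times> 'z \<Rightarrow> 'w \<times> int \<Rightarrow> real" where
  "loss_gap u = (\<lambda>(w, r). loss w (if r = 1 then fst u else snd u) - loss w (if r = 1 then snd u else fst u))"

lemma measurable_loss_gap [measurable]:
  assumes "u \<in> space Pairs"
  shows "loss_gap u \<in> borel_measurable (MW \<Otimes>\<^sub>M rad)"
proof -
  have [measurable]: "(\<lambda>_. fst u) \<in> MW \<Otimes>\<^sub>M rad \<rightarrow>\<^sub>M \<xi>" "(\<lambda>_. snd u) \<in> MW \<Otimes>\<^sub>M rad \<rightarrow>\<^sub>M \<xi>"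
    using assms by (auto simp: space_pair_measure)
  show ?thesis
    unfolding loss_gap_def case_prod_beta' by measurable
qed

text \<open>Since \<open>R\<^sub>i \<in> {-1, 1}\<close>, the loss gap between test and training element equals \<open>G\<^sub>i\<close>;
  the non-integrable case is trivial because the right-hand side is nonnegative.\<close>

lemma integral_loss_gap_le:
  assumes i: "i < n" and u: "u \<in> space Pairs"
  shows "ereal (integral\<^sup>L (cond_WR \<xi> MW K n i u) (loss_gap u))
    \<le> inv_conj (cgf (law_G \<xi> MW K n loss i u)) (cmi_pt \<xi> MW K n i u)"
proof -
  let ?P = "cond_WR \<xi> MW K n i u" and ?Q = "decoupled \<xi> MW K n i u"
  note P = cond_WR_prob[OF i u] and Q = decoupled_prob[OF i u]
  have [measurable]: "sign_gap u \<in> borel_measurable ?P" "loss_gap u \<in> borel_measurable ?P"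
    "snd \<in> ?P \<rightarrow>\<^sub>M rad"
    using measurable_sign_gap[OF u] measurable_loss_gap[OF u] P(2) by (simp_all cong: measurable_cong_sets)
  have "AE r in distr ?P rad snd. r \<in> {-1, 1}"
    unfolding distr_cond_WR_sign[OF i u] by (rule AE_rad)
  then have "AE x in ?P. snd x \<in> {-1, 1}"
    by (subst (asm) AE_distr_iff) auto
  then have gap_ae: "AE x in ?P. loss_gap u x = sign_gap u x"
    by eventually_elim (auto simp: loss_gap_def sign_gap_def)
  show ?thesis
  proof (cases "integrable ?P (sign_gap u)")
    case True
    have "ereal (integral\<^sup>L ?P (sign_gap u)) \<le> inv_conj (cgf (law_G \<xi> MW K n loss i u)) (kl_div ?P ?Q)"
      unfolding law_G_eq using P Q True integral_law_G[OF i u, unfolded law_G_eq] measurable_sign_gap[OF u]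
      by (intro integral_le_inv_conj_cgf) (auto cong: measurable_cong_sets)
    moreover have "integral\<^sup>L ?P (loss_gap u) = integral\<^sup>L ?P (sign_gap u)"
      using gap_ae by (intro integral_cong_AE) auto
    ultimately show ?thesis
      by (simp add: cmi_pt_eq_kl_div)
  next
    case False
    then have "\<not> integrable ?P (loss_gap u)"
      using gap_ae by (subst integrable_cong_AE) auto
    moreover have "0 \<le> inv_conj (cgf (law_G \<xi> MW K n loss i u)) (cmi_pt \<xi> MW K n i u)"
      using cmi_pt_nonneg[OF i u] cgf_law_G_nonneg[OF i u] by (rule inv_conj_nonneg)
    ultimately show ?thesis
      by (simp add: not_integrable_integral_eq zero_ereal_def)
  qed
qed

section \<open>The unused element is a fresh test sample\<close>

definition resample :: "nat \<Rightarrow> ('z \<times> 'z) \<times> (nat \<Rightarrow> 'z \<times> 'z) \<times> (nat \<Rightarrow> int) \<Rightarrow> (nat \<Rightarrow> 'z) \<times> 'z" where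
  "resample i x = (train_at i x, test_at i x)"

lemma measurable_resample [measurable]: "i < n \<Longrightarrow> resample i \<in> Pairs \<Otimes>\<^sub>M Draws \<rightarrow>\<^sub>M Sample \<Otimes>\<^sub>M \<xi>"
  unfolding resample_def by measurable

definition select_box :: "nat \<Rightarrow> (nat \<Rightarrow> 'z set) \<Rightarrow> (nat \<Rightarrow> int) \<Rightarrow> nat \<Rightarrow> ('z \<times> 'z) set" where
  "select_box i A rs j = (if j = i then space Pairs else if rs j = 1 then space \<xi> \<times> A j else A j \<times> space \<xi>)"

lemma sets_select_box: "(\<And>j. j < n \<Longrightarrow> A j \<in> sets \<xi>) \<Longrightarrow> j < n \<Longrightarrow> select_box i A rs j \<in> sets Pairs"
  by (auto simp: select_box_def)

lemma train_fun_upd_in_PiE_iff: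
  assumes i: "i < n" and zs: "zs \<in> (\<Pi>\<^sub>E j\<in>{..<n}. space \<xi> \<times> space \<xi>)"
  shows "train n (zs(i := u)) rs \<in> Pi\<^sub>E {..<n} A
    \<longleftrightarrow> (if rs i = 1 then snd u else fst u) \<in> A i \<and> zs \<in> Pi\<^sub>E {..<n} (select_box i A rs)"
proof -
  have train_j: "train n (zs(i := u)) rs j = (if rs j = 1 then snd ((zs(i := u)) j) else fst ((zs(i := u)) j))"
    if "j < n" for j
    using that by (simp add: train_def)
  have "train n (zs(i := u)) rs \<in> Pi\<^sub>E {..<n} A \<longleftrightarrow> (\<forall>j\<in>{..<n}. train n (zs(i := u)) rs j \<in> A j)"
    by (auto simp: PiE_iff extensional_def train_def)
  also have "\<dots> \<longleftrightarrow> train n (zs(i := u)) rs i \<in> A i \<and> (\<forall>j\<in>{..<n} - {i}. train n (zs(i := u)) rs j \<in> A j)"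
    using i by auto
  also have "train n (zs(i := u)) rs i = (if rs i = 1 then snd u else fst u)"
    using train_j[OF i] by simp
  also have "(\<forall>j\<in>{..<n} - {i}. train n (zs(i := u)) rs j \<in> A j) \<longleftrightarrow> (\<forall>j\<in>{..<n} - {i}. zs j \<in> select_box i A rs j)"
  proof (intro ball_cong refl)
    fix j assume j: "j \<in> {..<n} - {i}"
    then have "zs j \<in> space \<xi> \<times> space \<xi>"
      using zs by auto
    then show "train n (zs(i := u)) rs j \<in> A j \<longleftrightarrow> zs j \<in> select_box i A rs j"
      using j train_j[of j] by (cases "zs j") (auto simp: select_box_def)
  qed
  also have "\<dots> \<longleftrightarrow> zs \<in> Pi\<^sub>E {..<n} (select_box i A rs)"
    using zs i by (auto simp: PiE_iff select_box_def space_pair_measure)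
  finally show ?thesis .
qed

text \<open>For fixed draws only the \<open>i\<close>-th pair is free: the slice is a rectangle or empty.\<close>

lemma emeasure_resample_slice:
  assumes i: "i < n" and A: "\<And>j. j < n \<Longrightarrow> A j \<in> sets \<xi>" and B: "B \<in> sets \<xi>"
    and a: "a \<in> space Draws"
  shows "emeasure Pairs ((\<lambda>u. (u, a)) -` (resample i -` (Pi\<^sub>E {..<n} A \<times> B) \<inter> space (Pairs \<Otimes>\<^sub>M Draws)))
    = emeasure \<xi> B * emeasure \<xi> (A i) * indicator (Pi\<^sub>E {..<n} (select_box i A (snd a))) (fst a)"
proof -
  interpret \<xi>: prob_space \<xi> by (rule prob_space_\<xi>)
  let ?X = "resample i -` (Pi\<^sub>E {..<n} A \<times> B) \<inter> space (Pairs \<Otimes>\<^sub>M Draws)"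
  obtain zs rs where a_eq: "a = (zs, rs)" by (cases a)
  have zs: "zs \<in> (\<Pi>\<^sub>E j\<in>{..<n}. space \<xi> \<times> space \<xi>)"
    using a by (simp add: a_eq space_pair_measure space_PiM)
  define S where "S = (if rs i = 1 then B \<times> A i else A i \<times> B)"
  have mem: "(u, a) \<in> ?X \<longleftrightarrow> zs \<in> Pi\<^sub>E {..<n} (select_box i A rs) \<and> u \<in> S" for u
  proof -
    have "(u, a) \<in> ?X \<longleftrightarrow> u \<in> space Pairs \<and> (if rs i = 1 then snd u else fst u) \<in> A i
        \<and> zs \<in> Pi\<^sub>E {..<n} (select_box i A rs) \<and> (if rs i = 1 then fst u else snd u) \<in> B"
      using a by (auto simp: a_eq resample_def train_at_def test_at_def train_fun_upd_in_PiE_iff[OF i zs]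
          space_pair_measure)
    also have "\<dots> \<longleftrightarrow> zs \<in> Pi\<^sub>E {..<n} (select_box i A rs) \<and> u \<in> S"
      using sets.sets_into_space[OF B] sets.sets_into_space[OF A[OF i]]
      by (cases u) (auto simp: S_def space_pair_measure)
    finally show ?thesis .
  qed
  have "(\<lambda>u. (u, a)) -` ?X = (if zs \<in> Pi\<^sub>E {..<n} (select_box i A rs) then S else {})"
    by (rule set_eqI) (simp only: vimage_eq mem, simp)
  moreover have "emeasure Pairs S = emeasure \<xi> B * emeasure \<xi> (A i)"
    using A[OF i] B by (simp add: S_def \<xi>.emeasure_pair_measure_Times mult.commute)
  ultimately show ?thesis
    by (simp add: a_eq)
qed

lemma emeasure_resample_box:
  assumes i: "i < n" and A: "\<And>j. j < n \<Longrightarrow> A j \<in> sets \<xi>" and B: "B \<in> sets \<xi>"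
  shows "emeasure (Pairs \<Otimes>\<^sub>M Draws) (resample i -` (Pi\<^sub>E {..<n} A \<times> B) \<inter> space (Pairs \<Otimes>\<^sub>M Draws))
    = emeasure \<xi> B * (\<Prod>j<n. emeasure \<xi> (A j))"
proof -
  interpret \<xi>: prob_space \<xi> by (rule prob_space_\<xi>)
  interpret Pairs: prob_space Pairs by (rule prob_space_Pairs)
  interpret Signs: prob_space Signs by (rule prob_space_Signs)
  interpret Supersample: product_prob_space "\<lambda>_. Pairs" by unfold_locales
  interpret PD: pair_sigma_finite Pairs Draws
    using prob_space_Draws by (simp add: pair_sigma_finite_def prob_space_imp_sigma_finite
        Pairs.sigma_finite_measure_axioms)
  interpret SS: pair_sigma_finite Supersample Signs
    using prob_space_Supersample by (simp add: pair_sigma_finite_def prob_space_imp_sigma_finite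
        Signs.sigma_finite_measure_axioms)
  let ?X = "resample i -` (Pi\<^sub>E {..<n} A \<times> B) \<inter> space (Pairs \<Otimes>\<^sub>M Draws)"
  let ?c = "emeasure \<xi> B * emeasure \<xi> (A i)"
  let ?f = "\<lambda>(zs, rs). ?c * indicator (Pi\<^sub>E {..<n} (select_box i A rs)) zs"
  note slice = emeasure_resample_slice[OF i A B]
  have X: "?X \<in> sets (Pairs \<Otimes>\<^sub>M Draws)"
    using A B i by (intro measurable_sets[OF measurable_resample]) (auto intro!: sets_PiM_I_finite)
  have "?f \<in> borel_measurable Draws"
    using PD.measurable_emeasure_Pair2[OF X]
    by (rule measurable_cong[THEN iffD1, rotated]) (simp only: slice case_prod_beta')
  note Fubini = SS.nn_integral_snd[OF this, symmetric]
  have "emeasure (Pairs \<Otimes>\<^sub>M Draws) ?X = (\<integral>\<^sup>+a. emeasure Pairs ((\<lambda>u. (u, a)) -` ?X) \<partial>Draws)"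
    using X by (rule PD.emeasure_pair_measure_alt2)
  also have "\<dots> = (\<integral>\<^sup>+a. ?f a \<partial>Draws)"
    using slice by (intro nn_integral_cong) (auto simp: case_prod_beta')
  also have "\<dots> = (\<integral>\<^sup>+rs. \<integral>\<^sup>+zs. ?c * indicator (Pi\<^sub>E {..<n} (select_box i A rs)) zs \<partial>Supersample \<partial>Signs)"
    unfolding Fubini by simp
  also have "\<dots> = (\<integral>\<^sup>+rs. ?c * (\<Prod>j<n. if j = i then 1 else emeasure \<xi> (A j)) \<partial>Signs)"
  proof (intro nn_integral_cong)
    fix rs
    have boxes: "select_box i A rs j \<in> sets Pairs" if "j < n" for j
      using A that by (rule sets_select_box)
    have "(\<integral>\<^sup>+zs. ?c * indicator (Pi\<^sub>E {..<n} (select_box i A rs)) zs \<partial>Supersample)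
        = ?c * emeasure Supersample (Pi\<^sub>E {..<n} (select_box i A rs))"
      using boxes by (simp add: nn_integral_cmult_indicator sets_PiM_I_finite)
    also have "emeasure Supersample (Pi\<^sub>E {..<n} (select_box i A rs)) = (\<Prod>j<n. emeasure Pairs (select_box i A rs j))"
      using boxes by (intro Supersample.emeasure_PiM) auto
    also have "(\<Prod>j<n. emeasure Pairs (select_box i A rs j)) = (\<Prod>j<n. if j = i then 1 else emeasure \<xi> (A j))"
      using A by (intro prod.cong)
        (auto simp: select_box_def \<xi>.emeasure_pair_measure_Times Pairs.emeasure_space_1 \<xi>.emeasure_space_1)
    finally show "(\<integral>\<^sup>+zs. ?c * indicator (Pi\<^sub>E {..<n} (select_box i A rs)) zs \<partial>Supersample)
        = ?c * (\<Prod>j<n. if j = i then 1 else emeasure \<xi> (A j))" .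
  qed
  also have "\<dots> = emeasure \<xi> B * (\<Prod>j<n. emeasure \<xi> (A j))"
  proof -
    have "(\<Prod>j<n. if j = i then 1 else emeasure \<xi> (A j)) = (\<Prod>j\<in>{..<n} - {i}. emeasure \<xi> (A j))"
      using i by (subst prod.remove[of _ i]) (auto intro!: prod.cong)
    moreover have "(\<Prod>j<n. emeasure \<xi> (A j)) = emeasure \<xi> (A i) * (\<Prod>j\<in>{..<n} - {i}. emeasure \<xi> (A j))"
      using i by (subst prod.remove[of _ i]) auto
    ultimately show ?thesis
      by (simp add: Signs.emeasure_space_1 mult_ac)
  qed
  finally show ?thesis .
qed

lemma distr_resample:
  assumes i: "i < n"
  shows "distr (Pairs \<Otimes>\<^sub>M Draws) (Sample \<Otimes>\<^sub>M \<xi>) (resample i) = Sample \<Otimes>\<^sub>M \<xi>"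
proof (rule pair_PiM_eqI[symmetric])
  show "prob_space (distr (Pairs \<Otimes>\<^sub>M Draws) (Sample \<Otimes>\<^sub>M \<xi>) (resample i))"
    using prob_space_pair[OF prob_space_Pairs prob_space_Draws]
    by (rule prob_space.prob_space_distr[OF _ measurable_resample[OF i]])
  fix A B assume A: "\<And>j. j \<in> {..<n} \<Longrightarrow> A j \<in> sets \<xi>" and B: "B \<in> sets \<xi>"
  then have "Pi\<^sub>E {..<n} A \<times> B \<in> sets (Sample \<Otimes>\<^sub>M \<xi>)"
    by (auto intro!: sets_PiM_I_finite)
  then show "emeasure (distr (Pairs \<Otimes>\<^sub>M Draws) (Sample \<Otimes>\<^sub>M \<xi>) (resample i)) (Pi\<^sub>E {..<n} A \<times> B)
      = emeasure \<xi> B * (\<Prod>j\<in>{..<n}. emeasure \<xi> (A j))"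
    using emeasure_resample_box[OF i _ B, of A] A
    by (simp add: emeasure_distr[OF measurable_resample[OF i]])
qed (use prob_space_\<xi> in auto)

abbreviation "Outcomes \<equiv> (Sample \<Otimes>\<^sub>M MW) \<Otimes>\<^sub>M \<xi>"
abbreviation "Joint \<equiv> joint_ZW \<xi> MW K n"

definition output_kernel :: "(nat \<Rightarrow> 'z) \<times> 'z \<Rightarrow> (((nat \<Rightarrow> 'z) \<times> 'w) \<times> 'z) measure" where
  "output_kernel = (\<lambda>(zs, z). distr (K zs) Outcomes (\<lambda>w. ((zs, w), z)))"

lemma measurable_output_kernel [measurable]: "output_kernel \<in> Sample \<Otimes>\<^sub>M \<xi> \<rightarrow>\<^sub>M prob_algebra Outcomes"
  unfolding output_kernel_def case_prod_beta'
  by (intro measurable_distr_prob_space2[where M=MW]) measurable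

lemma measurable_Joint_kernel [measurable]:
  "(\<lambda>zs. distr (K zs) (Sample \<Otimes>\<^sub>M MW) (\<lambda>w. (zs, w))) \<in> Sample \<rightarrow>\<^sub>M prob_algebra (Sample \<Otimes>\<^sub>M MW)"
  by (rule measurable_distr_prob_space2[OF K_measurable]) measurable

lemma Joint_eq: "Joint = Sample \<bind> (\<lambda>zs. distr (K zs) (Sample \<Otimes>\<^sub>M MW) (\<lambda>w. (zs, w)))"
  unfolding joint_ZW_def
proof (rule bind_cong[OF refl])
  fix zs assume zs: "zs \<in> space Sample"
  have "(\<lambda>w. (zs, w)) \<in> K zs \<rightarrow>\<^sub>M Sample \<Otimes>\<^sub>M MW"
    using K_prob(2)[OF zs] zs by (simp cong: measurable_cong_sets)
  then show "K zs \<bind> (\<lambda>w. return (Sample \<Otimes>\<^sub>M MW) (zs, w)) = distr (K zs) (Sample \<Otimes>\<^sub>M MW) (\<lambda>w. (zs, w))"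
    by (rule bind_return_distr'[OF prob_space.not_empty[OF K_prob(1)[OF zs]]])
qed

lemma Joint_prob: "prob_space Joint" and sets_Joint: "sets Joint = sets (Sample \<Otimes>\<^sub>M MW)"
proof -
  have "Sample \<in> space (prob_algebra Sample)"
    using prob_space_Sample by (simp add: space_prob_algebra)
  then show "prob_space Joint" "sets Joint = sets (Sample \<Otimes>\<^sub>M MW)"
    unfolding Joint_eq
    using prob_space_bind'[OF _ measurable_Joint_kernel] sets_bind'[OF _ measurable_Joint_kernel] by auto
qed

lemma measurable_add_test:
  "(\<lambda>p. \<xi> \<bind> (\<lambda>z. return Outcomes (p, z))) \<in> Sample \<Otimes>\<^sub>M MW \<rightarrow>\<^sub>M subprob_algebra Outcomes"
  using prob_space_\<xi>
  by (intro measurable_bind[where N=\<xi>])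
    (auto intro!: measurable_const prob_space.M_in_subprob simp: return_measurable)

lemma bind_Joint_kernel_test:
  assumes zs: "zs \<in> space Sample"
  shows "distr (K zs) (Sample \<Otimes>\<^sub>M MW) (\<lambda>w. (zs, w)) \<bind> (\<lambda>p. \<xi> \<bind> (\<lambda>z. return Outcomes (p, z)))
    = \<xi> \<bind> (\<lambda>z. output_kernel (zs, z))"
proof -
  interpret \<xi>: prob_space \<xi> by (rule prob_space_\<xi>)
  interpret K: prob_space "K zs" by (rule K_prob(1)[OF zs])
  interpret KX: pair_prob_space "K zs" \<xi> ..
  have sets_K: "sets (K zs) = sets MW" by (rule K_prob(2)[OF zs])
  have Pair_zs: "(\<lambda>w. (zs, w)) \<in> K zs \<rightarrow>\<^sub>M Sample \<Otimes>\<^sub>M MW"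
    using sets_K zs by (simp cong: measurable_cong_sets)
  have "distr (K zs) (Sample \<Otimes>\<^sub>M MW) (\<lambda>w. (zs, w)) \<bind> (\<lambda>p. \<xi> \<bind> (\<lambda>z. return Outcomes (p, z)))
      = K zs \<bind> (\<lambda>w. \<xi> \<bind> (\<lambda>z. return Outcomes ((zs, w), z)))"
    by (subst bind_distr[OF Pair_zs measurable_add_test]) (auto simp: K.not_empty)
  also have "\<dots> = \<xi> \<bind> (\<lambda>z. K zs \<bind> (\<lambda>w. return Outcomes ((zs, w), z)))"
  proof (rule KX.bind_rotate)
    show "(\<lambda>(w, z). return Outcomes ((zs, w), z)) \<in> K zs \<Otimes>\<^sub>M \<xi> \<rightarrow>\<^sub>M subprob_algebra Outcomes"
      using zs sets_K
      by (simp cong: measurable_cong_sets add: return_measurable[THEN measurable_compose[rotated]])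
  qed
  also have "\<dots> = \<xi> \<bind> (\<lambda>z. output_kernel (zs, z))"
  proof (rule bind_cong[OF refl])
    fix z assume "z \<in> space \<xi>"
    then have "(\<lambda>w. ((zs, w), z)) \<in> K zs \<rightarrow>\<^sub>M Outcomes"
      using sets_K zs by (simp cong: measurable_cong_sets)
    then show "K zs \<bind> (\<lambda>w. return Outcomes ((zs, w), z)) = output_kernel (zs, z)"
      unfolding output_kernel_def by (simp add: bind_return_distr'[OF K.not_empty])
  qed
  finally show ?thesis .
qed

lemma Joint_pair_eq_bind: "Joint \<Otimes>\<^sub>M \<xi> = (Sample \<Otimes>\<^sub>M \<xi>) \<bind> output_kernel"
proof -
  interpret Joint: prob_space Joint by (rule Joint_prob)
  interpret \<xi>: prob_space \<xi> by (rule prob_space_\<xi>)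
  interpret Sample: prob_space Sample by (rule prob_space_Sample)
  interpret JX: pair_prob_space Joint \<xi> ..
  interpret SX: pair_prob_space Sample \<xi> ..
  have "sets (Joint \<Otimes>\<^sub>M \<xi>) = sets Outcomes"
    using sets_Joint by (intro sets_pair_measure_cong) auto
  then have return_eq: "return (Joint \<Otimes>\<^sub>M \<xi>) = return Outcomes"
    by (rule return_sets_cong)
  have "Joint \<Otimes>\<^sub>M \<xi> = Joint \<bind> (\<lambda>p. \<xi> \<bind> (\<lambda>z. return Outcomes (p, z)))"
    using JX.pair_measure_eq_bind unfolding return_eq .
  also have "\<dots> = Sample \<bind> (\<lambda>zs. distr (K zs) (Sample \<Otimes>\<^sub>M MW) (\<lambda>w. (zs, w)) \<bind> (\<lambda>p. \<xi> \<bind> (\<lambda>z. return Outcomes (p, z))))"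
    unfolding Joint_eq by (rule bind_assoc[OF measurable_prob_algebraD[OF measurable_Joint_kernel] measurable_add_test])
  also have "\<dots> = Sample \<bind> (\<lambda>zs. \<xi> \<bind> (\<lambda>z. output_kernel (zs, z)))"
    by (intro bind_cong refl bind_Joint_kernel_test)
  also have "\<dots> = (Sample \<Otimes>\<^sub>M \<xi>) \<bind> output_kernel"
    using SX.bind_pair_measure[of "\<lambda>zs z. output_kernel (zs, z)"]
      measurable_prob_algebraD[OF measurable_output_kernel] by simp
  finally show ?thesis .
qed

abbreviation "Draws_W \<equiv> Draws \<Otimes>\<^sub>M MW"
abbreviation "Super_W \<equiv> (Pairs \<Otimes>\<^sub>M Draws) \<Otimes>\<^sub>M MW"

definition cond_DW :: "nat \<Rightarrow> 'z \<times> 'z \<Rightarrow> (((nat \<Rightarrow> 'z \<times> 'z) \<times> (nat \<Rightarrow> int)) \<times> 'w) measure" where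
  "cond_DW i u = Draws \<bind> (\<lambda>a. distr (K (train_at i (u, a))) Draws_W (\<lambda>w. (a, w)))"

definition super_law :: "nat \<Rightarrow> ((('z \<times> 'z) \<times> (nat \<Rightarrow> 'z \<times> 'z) \<times> (nat \<Rightarrow> int)) \<times> 'w) measure" where
  "super_law i = Pairs \<bind> (\<lambda>u. distr (cond_DW i u) Super_W (\<lambda>(a, w). ((u, a), w)))"

definition to_outcome :: "nat \<Rightarrow> (('z \<times> 'z) \<times> (nat \<Rightarrow> 'z \<times> 'z) \<times> (nat \<Rightarrow> int)) \<times> 'w \<Rightarrow> ((nat \<Rightarrow> 'z) \<times> 'w) \<times> 'z" where
  "to_outcome i = (\<lambda>(x, w). ((train_at i x, w), test_at i x))"

lemma measurable_to_outcome [measurable]: "i < n \<Longrightarrow> to_outcome i \<in> Super_W \<rightarrow>\<^sub>M Outcomes"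
  unfolding to_outcome_def by measurable

lemma measurable_Draws_W_kernel [measurable]:
  "i < n \<Longrightarrow> (\<lambda>(u, a). distr (K (train_at i (u, a))) Draws_W (\<lambda>w. (a, w)))
    \<in> Pairs \<Otimes>\<^sub>M Draws \<rightarrow>\<^sub>M prob_algebra Draws_W"
  unfolding case_prod_beta' by (intro measurable_distr_prob_space2[where M=MW]) measurable

lemma measurable_W_sign: "i < n \<Longrightarrow> (\<lambda>(a, w). (w, snd a i)) \<in> Draws_W \<rightarrow>\<^sub>M MW \<Otimes>\<^sub>M rad"
  using measurable_compose[OF measurable_fst measurable_sign] by (simp add: case_prod_beta')

lemma measurable_cond_DW [measurable]: "i < n \<Longrightarrow> cond_DW i \<in> Pairs \<rightarrow>\<^sub>M prob_algebra Draws_W"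
  unfolding cond_DW_def using prob_space_Draws
  by (intro measurable_bind_prob_space2[OF measurable_const]) (auto simp: space_prob_algebra)

lemma sets_cond_DW:
  assumes "i < n" "u \<in> space Pairs"
  shows "sets (cond_DW i u) = sets Draws_W"
  using measurable_space[OF measurable_cond_DW[OF assms(1)] assms(2)] by (simp add: space_prob_algebra)

lemma measurable_super_kernel [measurable]:
  "i < n \<Longrightarrow> (\<lambda>u. distr (cond_DW i u) Super_W (\<lambda>(a, w). ((u, a), w))) \<in> Pairs \<rightarrow>\<^sub>M prob_algebra Super_W"
  by (rule measurable_distr_prob_space2[OF measurable_cond_DW]) measurable

lemma sets_super_law: "i < n \<Longrightarrow> sets (super_law i) = sets Super_W"
  unfolding super_law_def using prob_space_Pairs
  by (intro sets_bind'[OF _ measurable_super_kernel]) (auto simp: space_prob_algebra)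

lemma distr_distr_K_train_at:
  assumes i: "i < n" and u: "u \<in> space Pairs" and a: "a \<in> space Draws"
    and f [measurable]: "f \<in> Draws_W \<rightarrow>\<^sub>M N"
  shows "distr (distr (K (train_at i (u, a))) Draws_W (\<lambda>w. (a, w))) N f = distr (K (train_at i (u, a))) N (\<lambda>w. f (a, w))"
proof -
  have "(u, a) \<in> space (Pairs \<Otimes>\<^sub>M Draws)"
    using u a by (simp add: space_pair_measure)
  then have "(\<lambda>w. (a, w)) \<in> K (train_at i (u, a)) \<rightarrow>\<^sub>M Draws_W"
    using a K_train_at(2)[OF i] by (simp cong: measurable_cong_sets)
  then show ?thesis
    by (subst distr_distr) (simp_all add: comp_def)
qed

lemma distr_cond_DW_W_sign:
  assumes i: "i < n" and u: "u \<in> space Pairs"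
  shows "distr (cond_DW i u) (MW \<Otimes>\<^sub>M rad) (\<lambda>(a, w). (w, snd a i)) = cond_WR \<xi> MW K n i u"
proof -
  interpret Draws: prob_space Draws by (rule prob_space_Draws)
  have kernel: "(\<lambda>a. distr (K (train_at i (u, a))) Draws_W (\<lambda>w. (a, w))) \<in> Draws \<rightarrow>\<^sub>M subprob_algebra Draws_W"
    using measurable_Pair2[OF measurable_Draws_W_kernel[OF i] u] by (auto intro: measurable_prob_algebraD)
  note W_sign = measurable_W_sign[OF i]
  have "distr (cond_DW i u) (MW \<Otimes>\<^sub>M rad) (\<lambda>(a, w). (w, snd a i))
      = Draws \<bind> (\<lambda>a. distr (distr (K (train_at i (u, a))) Draws_W (\<lambda>w. (a, w))) (MW \<Otimes>\<^sub>M rad) (\<lambda>(a, w). (w, snd a i)))"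
    unfolding cond_DW_def by (rule distr_bind[OF kernel Draws.not_empty W_sign])
  also have "\<dots> = Draws \<bind> (\<lambda>a. distr (K (train_at i (u, a))) (MW \<Otimes>\<^sub>M rad) (\<lambda>w. (w, snd a i)))"
    using distr_distr_K_train_at[OF i u _ W_sign] by (intro bind_cong refl) simp
  also have "\<dots> = cond_WR \<xi> MW K n i u"
    by (rule cond_WR_eq[OF i u, symmetric])
  finally show ?thesis .
qed

lemma distr_super_kernel_outcome:
  assumes i: "i < n" and u: "u \<in> space Pairs"
  shows "distr (distr (cond_DW i u) Super_W (\<lambda>(a, w). ((u, a), w))) Outcomes (to_outcome i)
    = Draws \<bind> (\<lambda>a. output_kernel (resample i (u, a)))"
proof -
  interpret Draws: prob_space Draws by (rule prob_space_Draws)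
  have kernel: "(\<lambda>a. distr (K (train_at i (u, a))) Draws_W (\<lambda>w. (a, w))) \<in> Draws \<rightarrow>\<^sub>M subprob_algebra Draws_W"
    using measurable_Pair2[OF measurable_Draws_W_kernel[OF i] u] by (auto intro: measurable_prob_algebraD)
  have embed: "(\<lambda>(a, w). ((u, a), w)) \<in> Draws_W \<rightarrow>\<^sub>M Super_W"
    using u by measurable
  have outcome: "(\<lambda>(a, w). to_outcome i ((u, a), w)) \<in> Draws_W \<rightarrow>\<^sub>M Outcomes"
    using measurable_compose[OF embed measurable_to_outcome[OF i]] by (simp add: case_prod_beta')
  have "distr (distr (cond_DW i u) Super_W (\<lambda>(a, w). ((u, a), w))) Outcomes (to_outcome i)
      = distr (cond_DW i u) Outcomes (to_outcome i \<circ> (\<lambda>(a, w). ((u, a), w)))"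
    using embed measurable_cong_sets[OF sets_cond_DW[OF i u] refl]
    by (intro distr_distr[OF measurable_to_outcome[OF i]]) blast
  also have "to_outcome i \<circ> (\<lambda>(a, w). ((u, a), w)) = (\<lambda>(a, w). to_outcome i ((u, a), w))"
    by (auto simp: fun_eq_iff)
  also have "distr (cond_DW i u) Outcomes (\<lambda>(a, w). to_outcome i ((u, a), w))
      = Draws \<bind> (\<lambda>a. distr (distr (K (train_at i (u, a))) Draws_W (\<lambda>w. (a, w))) Outcomes
          (\<lambda>(a, w). to_outcome i ((u, a), w)))"
    unfolding cond_DW_def by (rule distr_bind[OF kernel Draws.not_empty outcome])
  also have "\<dots> = Draws \<bind> (\<lambda>a. output_kernel (resample i (u, a)))"
    using distr_distr_K_train_at[OF i u _ outcome]
    by (intro bind_cong refl) (simp add: output_kernel_def resample_def to_outcome_def)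
  finally show ?thesis .
qed

text \<open>By \<open>distr_resample\<close>, the supersample experiment reproduces \<open>(Z\<^sub>[\<^sub>n\<^sub>], W)\<close> together with
  an independent test sample.\<close>

lemma distr_super_law:
  assumes i: "i < n"
  shows "distr (super_law i) Outcomes (to_outcome i) = Joint \<Otimes>\<^sub>M \<xi>"
proof -
  interpret Pairs: prob_space Pairs by (rule prob_space_Pairs)
  interpret Draws: prob_space Draws by (rule prob_space_Draws)
  interpret PD: pair_prob_space Pairs Draws ..
  have kernel: "(\<lambda>x. output_kernel (resample i x)) \<in> Pairs \<Otimes>\<^sub>M Draws \<rightarrow>\<^sub>M subprob_algebra Outcomes"
    using measurable_compose[OF measurable_resample[OF i] measurable_output_kernel]
    by (auto intro: measurable_prob_algebraD)
  have "distr (super_law i) Outcomes (to_outcome i)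
      = Pairs \<bind> (\<lambda>u. distr (distr (cond_DW i u) Super_W (\<lambda>(a, w). ((u, a), w))) Outcomes (to_outcome i))"
    unfolding super_law_def
    by (rule distr_bind[OF measurable_prob_algebraD[OF measurable_super_kernel[OF i]] Pairs.not_empty
          measurable_to_outcome[OF i]])
  also have "\<dots> = Pairs \<bind> (\<lambda>u. Draws \<bind> (\<lambda>a. output_kernel (resample i (u, a))))"
    using distr_super_kernel_outcome[OF i] by (intro bind_cong refl)
  also have "\<dots> = (Pairs \<Otimes>\<^sub>M Draws) \<bind> (\<lambda>x. output_kernel (resample i x))"
    using PD.bind_pair_measure[of "\<lambda>u a. output_kernel (resample i (u, a))"] kernel
    by (simp add: case_prod_beta')
  also have "\<dots> = distr (Pairs \<Otimes>\<^sub>M Draws) (Sample \<Otimes>\<^sub>M \<xi>) (resample i) \<bind> output_kernel"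
    by (rule bind_distr[symmetric, OF measurable_resample[OF i] measurable_prob_algebraD[OF measurable_output_kernel]])
      (simp add: PD.P.not_empty)
  also have "\<dots> = Joint \<Otimes>\<^sub>M \<xi>"
    unfolding distr_resample[OF i] by (rule Joint_pair_eq_bind[symmetric])
  finally show ?thesis .
qed

definition test_train_gap :: "nat \<Rightarrow> ((nat \<Rightarrow> 'z) \<times> 'w) \<times> 'z \<Rightarrow> real" where
  "test_train_gap i = (\<lambda>((zs, w), z). loss w z - loss w (zs i))"

lemma measurable_test_train_gap [measurable]:
  assumes i: "i < n"
  shows "test_train_gap i \<in> borel_measurable Outcomes"
proof -
  have [measurable]: "(\<lambda>x. fst (fst x) i) \<in> Outcomes \<rightarrow>\<^sub>M \<xi>"
    using i measurable_compose[OF measurable_compose[OF measurable_fst measurable_fst]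
        measurable_component_singleton[of i "{..<n}" "\<lambda>_. \<xi>"]] by simp
  show ?thesis
    unfolding test_train_gap_def case_prod_beta' by measurable
qed

lemma test_train_gap_to_outcome:
  "i < n \<Longrightarrow> test_train_gap i (to_outcome i ((u, a), w)) = loss_gap u (w, snd a i)"
  unfolding test_train_gap_def to_outcome_def loss_gap_def train_at_def test_at_def train_def by simp

lemma integral_test_train_gap:
  assumes i: "i < n"
    and int_test: "integrable (Joint \<Otimes>\<^sub>M \<xi>) (\<lambda>(p, z). loss (snd p) z)"
    and int_train: "integrable Joint (\<lambda>p. loss (snd p) (fst p i))"
  shows "integrable (Joint \<Otimes>\<^sub>M \<xi>) (test_train_gap i)"
    and "integral\<^sup>L (Joint \<Otimes>\<^sub>M \<xi>) (test_train_gap i)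
      = (\<integral>p. pop_loss \<xi> loss (snd p) - loss (snd p) (fst p i) \<partial>Joint)"
proof -
  interpret \<xi>: prob_space \<xi> by (rule prob_space_\<xi>)
  interpret Joint: prob_space Joint by (rule Joint_prob)
  interpret JX: pair_prob_space Joint \<xi> ..
  have "integrable (distr (Joint \<Otimes>\<^sub>M \<xi>) Joint fst) (\<lambda>p. loss (snd p) (fst p i))"
    using int_train by (simp add: \<xi>.distr_pair_fst)
  then have "integrable (Joint \<Otimes>\<^sub>M \<xi>) (\<lambda>x. loss (snd (fst x)) (fst (fst x) i))"
    using int_train by (subst (asm) integrable_distr_eq) auto
  from Bochner_Integration.integrable_diff[OF int_test this]
  show int: "integrable (Joint \<Otimes>\<^sub>M \<xi>) (test_train_gap i)"
    unfolding test_train_gap_def by (simp add: case_prod_beta')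
  have [measurable]: "test_train_gap i \<in> borel_measurable (Joint \<Otimes>\<^sub>M \<xi>)"
    using int by auto
  have [measurable]: "(\<lambda>(p, z). loss (snd p) z) \<in> borel_measurable (Joint \<Otimes>\<^sub>M \<xi>)"
    "(\<lambda>p. loss (snd p) (fst p i)) \<in> borel_measurable Joint"
    using int_test int_train by auto
  have "integral\<^sup>L (Joint \<Otimes>\<^sub>M \<xi>) (test_train_gap i) = (\<integral>p. \<integral>z. test_train_gap i (p, z) \<partial>\<xi> \<partial>Joint)"
    by (rule JX.integral_fst'[OF int, symmetric])
  also have "\<dots> = (\<integral>p. pop_loss \<xi> loss (snd p) - loss (snd p) (fst p i) \<partial>Joint)"
  proof (rule integral_cong_AE)
    show "(\<lambda>p. \<integral>z. test_train_gap i (p, z) \<partial>\<xi>) \<in> borel_measurable Joint"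
      by (intro \<xi>.borel_measurable_lebesgue_integral) (simp add: case_prod_beta')
    have "(\<lambda>p. \<integral>z. loss (snd p) z \<partial>\<xi>) \<in> borel_measurable Joint"
      by (intro \<xi>.borel_measurable_lebesgue_integral) (simp add: case_prod_beta')
    then show "(\<lambda>p. pop_loss \<xi> loss (snd p) - loss (snd p) (fst p i)) \<in> borel_measurable Joint"
      unfolding pop_loss_def by measurable
    show "AE p in Joint. (\<integral>z. test_train_gap i (p, z) \<partial>\<xi>) = pop_loss \<xi> loss (snd p) - loss (snd p) (fst p i)"
      using JX.AE_integrable_fst'[OF int_test]
      by eventually_elim
        (auto simp: test_train_gap_def pop_loss_def Bochner_Integration.integral_diff \<xi>.prob_space)
  qed
  finally show "integral\<^sup>L (Joint \<Otimes>\<^sub>M \<xi>) (test_train_gap i)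
      = (\<integral>p. pop_loss \<xi> loss (snd p) - loss (snd p) (fst p i) \<partial>Joint)" .
qed

lemma integral_super_kernel_test_train_gap:
  assumes i: "i < n" and u: "u \<in> space Pairs"
  shows "(\<integral>x. test_train_gap i (to_outcome i x) \<partial>distr (cond_DW i u) Super_W (\<lambda>(a, w). ((u, a), w)))
    = integral\<^sup>L (cond_WR \<xi> MW K n i u) (loss_gap u)"
proof -
  have "(\<lambda>(a, w). ((u, a), w)) \<in> Draws_W \<rightarrow>\<^sub>M Super_W"
    using u by measurable
  then have embed: "(\<lambda>(a, w). ((u, a), w)) \<in> cond_DW i u \<rightarrow>\<^sub>M Super_W"
    using measurable_cong_sets[OF sets_cond_DW[OF i u] refl] by blast
  have W_sign: "(\<lambda>(a, w). (w, snd a i)) \<in> cond_DW i u \<rightarrow>\<^sub>M MW \<Otimes>\<^sub>M rad"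
    using measurable_W_sign[OF i] measurable_cong_sets[OF sets_cond_DW[OF i u] refl] by blast
  have "(\<integral>x. test_train_gap i (to_outcome i x) \<partial>distr (cond_DW i u) Super_W (\<lambda>(a, w). ((u, a), w)))
      = (\<integral>x. test_train_gap i (to_outcome i ((\<lambda>(a, w). ((u, a), w)) x)) \<partial>cond_DW i u)"
    using i by (intro integral_distr[OF embed]) measurable
  also have "\<dots> = (\<integral>x. loss_gap u ((\<lambda>(a, w). (w, snd a i)) x) \<partial>cond_DW i u)"
    by (intro Bochner_Integration.integral_cong refl) (auto simp: test_train_gap_to_outcome[OF i])
  also have "\<dots> = integral\<^sup>L (distr (cond_DW i u) (MW \<Otimes>\<^sub>M rad) (\<lambda>(a, w). (w, snd a i))) (loss_gap u)"
    by (rule integral_distr[OF W_sign measurable_loss_gap[OF u], symmetric])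
  finally show ?thesis
    unfolding distr_cond_DW_W_sign[OF i u] .
qed

lemma integral_cond_WR_loss_gap:
  assumes i: "i < n"
    and int_test: "integrable (Joint \<Otimes>\<^sub>M \<xi>) (\<lambda>(p, z). loss (snd p) z)"
    and int_train: "integrable Joint (\<lambda>p. loss (snd p) (fst p i))"
  shows "integrable Pairs (\<lambda>u. integral\<^sup>L (cond_WR \<xi> MW K n i u) (loss_gap u))"
    and "(\<integral>u. integral\<^sup>L (cond_WR \<xi> MW K n i u) (loss_gap u) \<partial>Pairs)
      = (\<integral>p. pop_loss \<xi> loss (snd p) - loss (snd p) (fst p i) \<partial>Joint)"
proof -
  let ?f = "\<lambda>x. test_train_gap i (to_outcome i x)"
  have to_outcome: "to_outcome i \<in> super_law i \<rightarrow>\<^sub>M Outcomes"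
    using measurable_to_outcome[OF i] measurable_cong_sets[OF sets_super_law[OF i] refl] by blast
  have [measurable]: "?f \<in> borel_measurable Super_W"
    using i by measurable
  have int: "integrable (super_law i) ?f"
    using integral_test_train_gap(1)[OF i int_test int_train]
    unfolding distr_super_law[OF i, symmetric]
    by (subst (asm) integrable_distr_eq[OF to_outcome measurable_test_train_gap[OF i]])
  have int_bind: "integrable (Pairs \<bind> (\<lambda>u. distr (cond_DW i u) Super_W (\<lambda>(a, w). ((u, a), w)))) ?f"
    using int unfolding super_law_def .
  have "integrable Pairs (\<lambda>u. \<integral>x. ?f x \<partial>distr (cond_DW i u) Super_W (\<lambda>(a, w). ((u, a), w)))"
    by (rule integrable_bind_kernel[OF measurable_super_kernel[OF i] _ prob_space_Pairs int_bind]) measurable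
  moreover have "integrable Pairs (\<lambda>u. \<integral>x. ?f x \<partial>distr (cond_DW i u) Super_W (\<lambda>(a, w). ((u, a), w)))
      \<longleftrightarrow> integrable Pairs (\<lambda>u. integral\<^sup>L (cond_WR \<xi> MW K n i u) (loss_gap u))"
    using integral_super_kernel_test_train_gap[OF i] by (intro Bochner_Integration.integrable_cong) auto
  ultimately show "integrable Pairs (\<lambda>u. integral\<^sup>L (cond_WR \<xi> MW K n i u) (loss_gap u))"
    by simp
  have "integral\<^sup>L (super_law i) ?f
      = (\<integral>u. \<integral>x. ?f x \<partial>distr (cond_DW i u) Super_W (\<lambda>(a, w). ((u, a), w)) \<partial>Pairs)"
    unfolding super_law_def
    by (rule integral_bind_kernel[OF measurable_super_kernel[OF i] _ prob_space_Pairs int_bind]) measurable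
  also have "\<dots> = (\<integral>u. integral\<^sup>L (cond_WR \<xi> MW K n i u) (loss_gap u) \<partial>Pairs)"
    using integral_super_kernel_test_train_gap[OF i] by (intro Bochner_Integration.integral_cong) auto
  finally have "integral\<^sup>L (super_law i) ?f = (\<integral>u. integral\<^sup>L (cond_WR \<xi> MW K n i u) (loss_gap u) \<partial>Pairs)" .
  moreover have "integral\<^sup>L (super_law i) ?f = integral\<^sup>L (Joint \<Otimes>\<^sub>M \<xi>) (test_train_gap i)"
    unfolding distr_super_law[OF i, symmetric]
    by (rule integral_distr[OF to_outcome measurable_test_train_gap[OF i], symmetric])
  ultimately show "(\<integral>u. integral\<^sup>L (cond_WR \<xi> MW K n i u) (loss_gap u) \<partial>Pairs)
      = (\<integral>p. pop_loss \<xi> loss (snd p) - loss (snd p) (fst p i) \<partial>Joint)"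
    using integral_test_train_gap(2)[OF i int_test int_train] by simp
qed

lemma gen_eq_sum:
  assumes int_test: "integrable (Joint \<Otimes>\<^sub>M \<xi>) (\<lambda>(p, z). loss (snd p) z)"
    and int_train: "\<And>i. i < n \<Longrightarrow> integrable Joint (\<lambda>p. loss (snd p) (fst p i))"
  shows "gen \<xi> MW K n loss = (\<Sum>i<n. \<integral>p. pop_loss \<xi> loss (snd p) - loss (snd p) (fst p i) \<partial>Joint) / real n"
proof -
  interpret Joint: prob_space Joint by (rule Joint_prob)
  interpret \<xi>: prob_space \<xi> by (rule prob_space_\<xi>)
  interpret JX: pair_prob_space Joint \<xi> ..
  have "integrable Joint (\<lambda>p. pop_loss \<xi> loss (snd p))"
    using JX.integrable_fst'[OF int_test] unfolding pop_loss_def by simp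
  then have int: "integrable Joint (\<lambda>p. pop_loss \<xi> loss (snd p) - loss (snd p) (fst p i))" if "i < n" for i
    using int_train[OF that] by (rule Bochner_Integration.integrable_diff)
  have "gen \<xi> MW K n loss = (\<integral>p. (\<Sum>i<n. pop_loss \<xi> loss (snd p) - loss (snd p) (fst p i)) / real n \<partial>Joint)"
    unfolding gen_def emp_loss_def using n_pos
    by (intro Bochner_Integration.integral_cong refl) (simp add: sum_subtractf field_simps)
  also have "\<dots> = (\<Sum>i<n. \<integral>p. pop_loss \<xi> loss (snd p) - loss (snd p) (fst p i) \<partial>Joint) / real n"
    using int by (simp add: Bochner_Integration.integral_sum)
  finally show ?thesis .
qed

lemma integral_pop_loss_minus_loss_le:
  assumes i: "i < n"
    and int_test: "integrable (Joint \<Otimes>\<^sub>M \<xi>) (\<lambda>(p, z). loss (snd p) z)"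
    and int_train: "integrable Joint (\<lambda>p. loss (snd p) (fst p i))"
  shows "ereal (\<integral>p. pop_loss \<xi> loss (snd p) - loss (snd p) (fst p i) \<partial>Joint)
    \<le> eexp Pairs (\<lambda>u. inv_conj (cgf (law_G \<xi> MW K n loss i u)) (cmi_pt \<xi> MW K n i u))"
  unfolding integral_cond_WR_loss_gap(2)[OF assms, symmetric]
proof (rule integral_le_eexp_nonneg)
  show "integrable Pairs (\<lambda>u. integral\<^sup>L (cond_WR \<xi> MW K n i u) (loss_gap u))"
    by (rule integral_cond_WR_loss_gap(1)[OF assms])
  fix u assume u: "u \<in> space Pairs"
  show "ereal (integral\<^sup>L (cond_WR \<xi> MW K n i u) (loss_gap u))
      \<le> inv_conj (cgf (law_G \<xi> MW K n loss i u)) (cmi_pt \<xi> MW K n i u)"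
    by (rule integral_loss_gap_le[OF i u])
  show "0 \<le> inv_conj (cgf (law_G \<xi> MW K n loss i u)) (cmi_pt \<xi> MW K n i u)"
    using cmi_pt_nonneg[OF i u] cgf_law_G_nonneg[OF i u] by (rule inv_conj_nonneg)
qed

lemma eexp_inv_conj_cgf_le:
  assumes "i < n"
  shows "eexp Pairs (\<lambda>u. inv_conj (cgf (law_G \<xi> MW K n loss i u)) (cmi_pt \<xi> MW K n i u))
    \<le> inv_conj (\<lambda>t. eexp Pairs (\<lambda>u. cgf (law_G \<xi> MW K n loss i u) t)) (cmi \<xi> MW K n i)"
  unfolding cmi_def
  using cmi_pt_nonneg[OF assms] cgf_law_G_nonneg[OF assms] measurable_cgf_law_G[OF assms]
  by (rule eexp_inv_conj_le)

end

theorem theorem5: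
  fixes \<xi> :: "'z measure" and MW :: "'w measure"
    and K :: "(nat \<Rightarrow> 'z) \<Rightarrow> 'w measure" and loss :: "'w \<Rightarrow> 'z \<Rightarrow> real" and n :: nat
  assumes "prob_space \<xi>"
    and "n > 0"
    and "K \<in> measurable (PiM {..<n} (\<lambda>_. \<xi>)) (prob_algebra MW)"
    and "(\<lambda>(w, z). loss w z) \<in> borel_measurable (MW \<Otimes>\<^sub>M \<xi>)"
    and "integrable (joint_ZW \<xi> MW K n \<Otimes>\<^sub>M \<xi>) (\<lambda>(p, z). loss (snd p) z)"
    and "\<And>i. i < n \<Longrightarrow> integrable (joint_ZW \<xi> MW K n) (\<lambda>p. loss (snd p) (fst p i))"
  shows "ereal (gen \<xi> MW K n loss)
           \<le> (\<Sum>i<n. eexp (\<xi> \<Otimes>\<^sub>M \<xi>)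
                 (\<lambda>u. inv_conj (cgf (law_G \<xi> MW K n loss i u)) (cmi_pt \<xi> MW K n i u))) / ereal (real n)
       \<and> (\<Sum>i<n. eexp (\<xi> \<Otimes>\<^sub>M \<xi>)
                 (\<lambda>u. inv_conj (cgf (law_G \<xi> MW K n loss i u)) (cmi_pt \<xi> MW K n i u))) / ereal (real n)
           \<le> (\<Sum>i<n. inv_conj (\<lambda>t. eexp (\<xi> \<Otimes>\<^sub>M \<xi>) (\<lambda>u. cgf (law_G \<xi> MW K n loss i u) t))
                                (cmi \<xi> MW K n i)) / ereal (real n)"
proof -
  interpret supersample \<xi> MW K loss n
    using assms(1-4) by (rule supersample.intro)
  have n: "0 < ereal (real n)"
    using assms(2) by simp
  have "ereal (gen \<xi> MW K n loss)
      = ereal (\<Sum>i<n. \<integral>p. pop_loss \<xi> loss (snd p) - loss (snd p) (fst p i) \<partial>Joint) / ereal (real n)"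
    using gen_eq_sum[OF assms(5,6)] by simp
  also have "\<dots> \<le> (\<Sum>i<n. eexp Pairs
      (\<lambda>u. inv_conj (cgf (law_G \<xi> MW K n loss i u)) (cmi_pt \<xi> MW K n i u))) / ereal (real n)"
    unfolding sum_ereal[symmetric] using integral_pop_loss_minus_loss_le[OF _ assms(5,6)]
    by (intro ereal_divide_right_mono[OF _ n] sum_mono) auto
  finally show ?thesis
    using eexp_inv_conj_cgf_le by (auto intro!: ereal_divide_right_mono[OF _ n] sum_mono)
qed

end
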